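(* Let $X$ and $Y$ be nontrivial real Hausdorff locally convex spaces, $A:X\to Y$ a continuous linear operator, $h\in\Gamma(Y)$, $x^{\ast}\in X^{\ast}$, and assume $f:=h\circ A+x^{\ast}$ belongs to $\Gamma(X)$ (i.e. $\operatorname{dom}h\cap\operatorname{Im}A\neq\emptyset$). Then: (a) $f_\infty=h_\infty\circ A+x^{\ast}$ and $\ker A\subset[f_\infty=x^{\ast}]$; (b) if $h_\infty\ge0$, then $x^{\ast}\in\partial f_\infty(0)=\overline{\operatorname{dom}f^{\ast}}$; the converse implication holds if, moreover, $\operatorname{Im}A=Y$; (c) if $[h_\infty\le0]=\{0\}$, then $\ker A=[f_\infty\le x^{\ast}]$ and $x^{\ast}\in\operatorname{qri}\overline{\operatorname{dom}f^{\ast}}$; conversely, if $\operatorname{Im}A=Y$ and $\ker A=[f_\infty\le x^{\ast}]$, then $[h_\infty\le0]=\{0\}$; (d) if $h$ is bounded from below, then $h_\infty\ge0$ and $x^{\ast}\in\operatorname{dom}f^{\ast}$; if $\operatorname{Im}A=Y$, then $\inf h=-f^{\ast}(x^{\ast})$, and so $h$ is bounded from below if and only if $x^{\ast}\in\operatorname{dom}f^{\ast}$; (e) if $\operatorname{Im}A=Y$, then $h$ attains its infimum on $Y$ if and only if $x^{\ast}\in\operatorname{Im}\partial f$.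
   Context: $X^{\ast}$ is the topological dual of $X$ with the weak$^{\ast}$ topology (closures in $X^{\ast}$ are weak$^{\ast}$ closures); $\langle x,x^{\ast}\rangle=x^{\ast}(x)$. $\Gamma(V)$: proper lower semicontinuous convex functions on $V$ with values in $\mathbb{R}\cup\{\pm\infty\}$. For $\varphi\in\Gamma(V)$: $\operatorname{dom}\varphi=\{\varphi<\infty\}$, $\varphi^{\ast}(v^{\ast})=\sup_v(\langle v,v^{\ast}\rangle-\varphi(v))$, $\partial\varphi(v)=\{v^{\ast}:\langle v'-v,v^{\ast}\rangle\le\varphi(v')-\varphi(v)\ \forall v'\}$ if $\varphi(v)\in\mathbb{R}$ (empty otherwise), $\operatorname{Im}\partial\varphi=\bigcup_v\partial\varphi(v)$, and recession function $\varphi_\infty(u)=\lim_{t\to\infty}(\varphi(v_0+tu)-\varphi(v_0))/t$ for any $v_0\in\operatorname{dom}\varphi$. $[f_\infty\le x^{\ast}]=\{u: f_\infty(u)\le\langle u,x^{\ast}\rangle\}$, $[f_\infty=x^{\ast}]$ similarly; $[h_\infty\le0]=\{y: h_\infty(y)\le0\}$. For convex $B\subset X^{\ast}$, $\operatorname{qri}B=\{b\in B:\overline{\mathbb{R}_+(B-b)}\text{ is a linear subspace}\}$. *)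

theory Defs
  imports "HOL-Analysis.Analysis"
begin

definition lcs :: "('a::{real_vector,t2_space}) itself \<Rightarrow> bool" where
  "lcs _ \<longleftrightarrow>
     continuous_on UNIV (\<lambda>p::'a \<times> 'a. fst p + snd p) \<and>
     continuous_on UNIV (\<lambda>p::real \<times> 'a. fst p *\<^sub>R snd p) \<and>
     (\<forall>U::'a set. open U \<and> 0 \<in> U \<longrightarrow> (\<exists>V. open V \<and> convex V \<and> 0 \<in> V \<and> V \<subseteq> U))"

definition nontrivial :: "('a::real_vector) itself \<Rightarrow> bool" where
  "nontrivial _ \<longleftrightarrow> (\<exists>x::'a. x \<noteq> 0)"

definition dual :: "('a::{real_vector,topological_space} \<Rightarrow> real) set" where
  "dual = {\<phi>. linear \<phi> \<and> continuous_on UNIV \<phi>}"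

text \<open>Weak-star closure in the dual (closure w.r.t. the weak-star topology on dual).\<close>
definition wclosure :: "('a::{real_vector,topological_space} \<Rightarrow> real) set \<Rightarrow> ('a \<Rightarrow> real) set" where
  "wclosure B = {\<phi> \<in> dual. \<forall>F e. finite F \<and> e > 0 \<longrightarrow>
      (\<exists>b\<in>B. \<forall>x\<in>F. \<bar>b x - \<phi> x\<bar> < e)}"

definition Gamma :: "(('a::{real_vector,topological_space}) \<Rightarrow> ereal) set" where
  "Gamma = {\<phi>. (\<forall>x. \<phi> x \<noteq> -\<infinity>) \<and> (\<exists>x. \<phi> x \<noteq> \<infinity>) \<and>
     (\<forall>c::ereal. closed {x. \<phi> x \<le> c}) \<and>
     (\<forall>x y. \<forall>t\<in>{0<..<1::real}.
        \<phi> ((1 - t) *\<^sub>R x + t *\<^sub>R y) \<le> ereal (1 - t) * \<phi> x + ereal t * \<phi> y)}"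

definition edom :: "('a \<Rightarrow> ereal) \<Rightarrow> 'a set" where
  "edom \<phi> = {v. \<phi> v < \<infinity>}"

definition conj :: "('a \<Rightarrow> ereal) \<Rightarrow> ('a \<Rightarrow> real) \<Rightarrow> ereal" where
  "conj \<phi> vs = (SUP v. ereal (vs v) - \<phi> v)"

definition conj_dom :: "('a::{real_vector,topological_space} \<Rightarrow> ereal) \<Rightarrow> ('a \<Rightarrow> real) set" where
  "conj_dom \<phi> = {vs \<in> dual. conj \<phi> vs < \<infinity>}"

definition subdiff :: "('a::{real_vector,topological_space} \<Rightarrow> ereal) \<Rightarrow> 'a \<Rightarrow> ('a \<Rightarrow> real) set" where
  "subdiff \<phi> v = (if \<phi> v \<noteq> \<infinity> \<and> \<phi> v \<noteq> -\<infinity>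
      then {vs \<in> dual. \<forall>v'. ereal (vs (v' - v)) \<le> \<phi> v' - \<phi> v} else {})"

definition Im_subdiff :: "('a::{real_vector,topological_space} \<Rightarrow> ereal) \<Rightarrow> ('a \<Rightarrow> real) set" where
  "Im_subdiff \<phi> = (\<Union>v. subdiff \<phi> v)"

text \<open>Recession function, computed from a base point in the domain
  (the paper notes the value does not depend on the choice).\<close>
definition recession :: "('a::real_vector \<Rightarrow> ereal) \<Rightarrow> 'a \<Rightarrow> ereal" where
  "recession \<phi> u = (let v0 = (SOME v0. v0 \<in> edom \<phi>) in
     Lim at_top (\<lambda>t::real. (\<phi> (v0 + t *\<^sub>R u) - \<phi> v0) / ereal t))"

definition lin_subspace :: "('a \<Rightarrow> real) set \<Rightarrow> bool" where
  "lin_subspace S \<longleftrightarrow> (\<lambda>x. 0) \<in> S \<and> (\<forall>a\<in>S. \<forall>b\<in>S. (\<lambda>x. a x + b x) \<in> S) \<and>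
     (\<forall>c::real. \<forall>a\<in>S. (\<lambda>x. c * a x) \<in> S)"

definition qri :: "('a::{real_vector,topological_space} \<Rightarrow> real) set \<Rightarrow> ('a \<Rightarrow> real) set" where
  "qri B = {b \<in> B. lin_subspace (wclosure {(\<lambda>x. t * (c x - b x)) | t c. t \<ge> 0 \<and> c \<in> B})}"

end

theory Submission
  imports Defs "HOL-Library.Function_Algebras"
begin

(* Fix x0 with f x0 finite. Since the difference quotients (f (x0 + t u) - f x0) / t increase
   with t, the recession function is their supremum over t > 0, and this supremum does not depend
   on x0 (lower semicontinuity and convexity move linear bounds along rays from one base point to
   another); (a) is then a direct computation. A function in Gamma is the supremum of its
   continuous affine minorants, which come from separating points below its epigraph; hence
   f_infinity u is the supremum of b u over b in dom f^*, and the subdifferential of f_infinity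
   at 0 is the weak-star closure of dom f^*. Both the epigraph separation and the weak-star
   separation (which only involves finitely many evaluations) are instances of one algebraic
   separation theorem, proved from the Hahn-Banach theorem for the Minkowski functional.
   For (c), [h_infinity <= 0] = {0} turns [f_infinity <= x^*] into ker A, and then the
   weak-star closed cone spanned by the subdifferential minus x^* is the annihilator of ker A,
   a linear subspace. When A is onto, f^* takes the value - inf h at x^*, and x^* is a
   subgradient of f at x exactly when A x minimises h, which gives (d) and (e). *)

section \<open>Hahn-Banach theorem for sublinear functionals\<close>

definition sublinear :: "('v::real_vector \<Rightarrow> real) \<Rightarrow> bool" where
  "sublinear p \<longleftrightarrow>
     (\<forall>x y. p (x + y) \<le> p x + p y) \<and> (\<forall>t x. 0 \<le> t \<longrightarrow> p (t *\<^sub>R x) = t * p x)"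

lemma sublinear_zero: "sublinear p \<Longrightarrow> p 0 = 0"
  unfolding sublinear_def by (metis mult_zero_left order_refl scaleR_zero_left)

(* Graphs of partial linear functionals below p, taken as relations so that Zorn's lemma
   can work with inclusion; single-valuedness follows from the domination. *)
definition dominated_linear_graph :: "('v::real_vector \<Rightarrow> real) \<Rightarrow> ('v \<times> real) set \<Rightarrow> bool" where
  "dominated_linear_graph p R \<longleftrightarrow>
     (\<forall>x a y b. (x, a) \<in> R \<longrightarrow> (y, b) \<in> R \<longrightarrow> (x + y, a + b) \<in> R) \<and>
     (\<forall>x a c. (x, a) \<in> R \<longrightarrow> (c *\<^sub>R x, c * a) \<in> R) \<and>
     (\<forall>x a. (x, a) \<in> R \<longrightarrow> a \<le> p x)"

lemma dominated_linear_graph_single_valued: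
  assumes p: "sublinear p" and R: "dominated_linear_graph p R" and "(x, a) \<in> R" "(x, b) \<in> R"
  shows "a = b"
proof -
  have "(x + (-1) *\<^sub>R x, a + (-1) * b) \<in> R"
    using R assms(3,4) unfolding dominated_linear_graph_def by blast
  then have "(0, a - b) \<in> R" by simp
  then have "(c *\<^sub>R 0, c * (a - b)) \<in> R" for c
    using R unfolding dominated_linear_graph_def by blast
  then have "c * (a - b) \<le> 0" for c
    using R sublinear_zero[OF p] unfolding dominated_linear_graph_def by fastforce
  from this[of 1] this[of "-1"] show ?thesis by simp
qed

context
  fixes p :: "'v::real_vector \<Rightarrow> real" and R :: "('v \<times> real) set" and v :: 'v and c :: real
  assumes p: "sublinear p" and R: "dominated_linear_graph p R"
    and c_ge: "\<And>y b. (y, b) \<in> R \<Longrightarrow> b - p (y - v) \<le> c"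
    and c_le: "\<And>x a. (x, a) \<in> R \<Longrightarrow> c \<le> p (x + v) - a"
begin

lemma dominated_adjoin_bound:
  assumes xa: "(x, a) \<in> R"
  shows "a + t * c \<le> p (x + t *\<^sub>R v)"
proof (cases "t = 0")
  case True
  then show ?thesis using R xa unfolding dominated_linear_graph_def by simp
next
  case False
  define s where "s = \<bar>t\<bar>"
  have s: "s > 0" using False unfolding s_def by simp
  have "(inverse s *\<^sub>R x, inverse s * a) \<in> R" using R xa unfolding dominated_linear_graph_def by blast
  then have "inverse s * a + sgn t * c \<le> p (inverse s *\<^sub>R x + sgn t *\<^sub>R v)"
    using c_ge c_le False by (cases "t > 0") force+
  then have "s * (inverse s * a + sgn t * c) \<le> s * p (inverse s *\<^sub>R x + sgn t *\<^sub>R v)"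
    using s by simp
  moreover have "s * sgn t = t" unfolding s_def by (simp add: abs_mult_sgn)
  moreover have "s * p (inverse s *\<^sub>R x + sgn t *\<^sub>R v) = p (s *\<^sub>R (inverse s *\<^sub>R x + sgn t *\<^sub>R v))"
    using p s unfolding sublinear_def by simp
  ultimately show ?thesis using s by (simp add: algebra_simps scaleR_add_right)
qed

lemma dominated_linear_graph_adjoin:
  "dominated_linear_graph p {(x + t *\<^sub>R v, a + t * c) | x a t. (x, a) \<in> R}"
  unfolding dominated_linear_graph_def
proof (intro conjI allI impI)
  fix x a y b assume "(x, a) \<in> {(x + t *\<^sub>R v, a + t * c) | x a t. (x, a) \<in> R}"
    "(y, b) \<in> {(x + t *\<^sub>R v, a + t * c) | x a t. (x, a) \<in> R}"
  then obtain x1 a1 t1 x2 a2 t2 where "(x1, a1) \<in> R" "(x2, a2) \<in> R"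
    "x = x1 + t1 *\<^sub>R v" "a = a1 + t1 * c" "y = x2 + t2 *\<^sub>R v" "b = a2 + t2 * c"
    by blast
  moreover have "(x1 + x2, a1 + a2) \<in> R"
    using R \<open>(x1, a1) \<in> R\<close> \<open>(x2, a2) \<in> R\<close> unfolding dominated_linear_graph_def by blast
  ultimately show "(x + y, a + b) \<in> {(x + t *\<^sub>R v, a + t * c) | x a t. (x, a) \<in> R}"
    by (intro CollectI exI[of _ "x1 + x2"] exI[of _ "a1 + a2"] exI[of _ "t1 + t2"])
      (auto simp: algebra_simps)
next
  fix x a d assume "(x, a) \<in> {(x + t *\<^sub>R v, a + t * c) | x a t. (x, a) \<in> R}"
  then obtain x1 a1 t1 where "(x1, a1) \<in> R" "x = x1 + t1 *\<^sub>R v" "a = a1 + t1 * c" by blast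
  then have "(d *\<^sub>R x1, d * a1) \<in> R"
    and "(d *\<^sub>R x, d * a) = (d *\<^sub>R x1 + (d * t1) *\<^sub>R v, d * a1 + (d * t1) * c)"
    using R unfolding dominated_linear_graph_def by (auto simp: algebra_simps)
  then show "(d *\<^sub>R x, d * a) \<in> {(x + t *\<^sub>R v, a + t * c) | x a t. (x, a) \<in> R}" by blast
next
  fix x a assume "(x, a) \<in> {(x + t *\<^sub>R v, a + t * c) | x a t. (x, a) \<in> R}"
  then show "a \<le> p x" using dominated_adjoin_bound by auto
qed

end

lemma dominated_linear_graph_extend:
  assumes p: "sublinear p" and R: "dominated_linear_graph p R" and "R \<noteq> {}"
    and v: "\<And>a. (v, a) \<notin> R"
  shows "\<exists>R'. dominated_linear_graph p R' \<and> R \<subset> R'"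
proof -
  have zero: "(0, 0) \<in> R"
    using \<open>R \<noteq> {}\<close> R unfolding dominated_linear_graph_def by (metis mult_zero_left scaleR_zero_left ex_in_conv prod.exhaust)
  have lower_le: "b - p (y - v) \<le> p (x + v) - a" if "(x, a) \<in> R" "(y, b) \<in> R" for x a y b
  proof -
    have "a + b \<le> p (x + y)" using R that unfolding dominated_linear_graph_def by blast
    also have "\<dots> \<le> p (x + v) + p (y - v)" using p unfolding sublinear_def by (metis add.assoc diff_add_cancel add.commute)
    finally show ?thesis by simp
  qed
  define lower where "lower = {b - p (y - v) | y b. (y, b) \<in> R}"
  have "bdd_above lower" unfolding lower_def bdd_above_def using lower_le[OF zero] by blast
  then have c_ge: "b - p (y - v) \<le> Sup lower" if "(y, b) \<in> R" for y b
    by (rule cSup_upper[rotated]) (use that lower_def in blast)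
  have c_le: "Sup lower \<le> p (x + v) - a" if "(x, a) \<in> R" for x a
    by (rule cSup_least) (use zero that lower_le lower_def in blast)+
  define R' where "R' = {(x + t *\<^sub>R v, a + t * Sup lower) | x a t. (x, a) \<in> R}"
  have "dominated_linear_graph p R'"
    unfolding R'_def using p R c_ge c_le by (rule dominated_linear_graph_adjoin)
  moreover have "R \<subseteq> R'" unfolding R'_def by force
  moreover have "(v, Sup lower) \<in> R'" unfolding R'_def using zero by force
  ultimately show ?thesis using v by blast
qed

lemma dominated_linear_graph_Union:
  assumes C: "\<And>R. R \<in> C \<Longrightarrow> dominated_linear_graph p R"
    and chain: "\<And>R S. R \<in> C \<Longrightarrow> S \<in> C \<Longrightarrow> R \<subseteq> S \<or> S \<subseteq> R"
  shows "dominated_linear_graph p (\<Union>C)"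
  unfolding dominated_linear_graph_def
proof (intro conjI allI impI)
  fix x a y b assume "(x, a) \<in> \<Union>C" "(y, b) \<in> \<Union>C"
  then obtain R S where "R \<in> C" "S \<in> C" "(x, a) \<in> R" "(y, b) \<in> S" by blast
  then show "(x + y, a + b) \<in> \<Union>C"
    using chain[of R S] C unfolding dominated_linear_graph_def by blast
next
  fix x a d assume "(x, a) \<in> \<Union>C"
  then show "(d *\<^sub>R x, d * a) \<in> \<Union>C" using C unfolding dominated_linear_graph_def by blast
next
  fix x a assume "(x, a) \<in> \<Union>C"
  then show "a \<le> p x" using C unfolding dominated_linear_graph_def by blast
qed

lemma dominated_linear_graph_maximal:
  assumes R0: "dominated_linear_graph p R0"
  shows "\<exists>M. dominated_linear_graph p M \<and> R0 \<subseteq> M \<and>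
    (\<forall>R. dominated_linear_graph p R \<longrightarrow> M \<subseteq> R \<longrightarrow> R = M)"
proof -
  define \<R> where "\<R> = {R. R0 \<subseteq> R \<and> dominated_linear_graph p R}"
  have "\<exists>M\<in>\<R>. \<forall>X\<in>\<R>. M \<subseteq> X \<longrightarrow> X = M"
  proof (rule Zorn_Lemma2, intro ballI)
    fix C assume C: "C \<in> chains \<R>"
    show "\<exists>U\<in>\<R>. \<forall>X\<in>C. X \<subseteq> U"
    proof (cases "C = {}")
      case True
      then show ?thesis using R0 unfolding \<R>_def by blast
    next
      case False
      have "dominated_linear_graph p (\<Union>C)"
        using chainsD[OF C] chainsD2[OF C] unfolding \<R>_def by (intro dominated_linear_graph_Union) auto
      moreover have "R0 \<subseteq> \<Union>C" using False chainsD2[OF C] unfolding \<R>_def by blast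
      ultimately show ?thesis unfolding \<R>_def by blast
    qed
  qed
  then obtain M where "M \<in> \<R>" and "\<And>R. R \<in> \<R> \<Longrightarrow> M \<subseteq> R \<Longrightarrow> R = M" by blast
  then show ?thesis unfolding \<R>_def by (metis (no_types, lifting) mem_Collect_eq order_trans)
qed

lemma dominated_linear_graph_line:
  assumes p: "sublinear p"
  shows "dominated_linear_graph p (range (\<lambda>t. (t *\<^sub>R y, t * p y)))"
  unfolding dominated_linear_graph_def
proof (intro conjI allI impI)
  fix x a z b assume "(x, a) \<in> range (\<lambda>t. (t *\<^sub>R y, t * p y))" "(z, b) \<in> range (\<lambda>t. (t *\<^sub>R y, t * p y))"
  then obtain s t where "x = s *\<^sub>R y" "a = s * p y" "z = t *\<^sub>R y" "b = t * p y" by blast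
  then have "(x + z, a + b) = (\<lambda>t. (t *\<^sub>R y, t * p y)) (s + t)" by (simp add: algebra_simps)
  then show "(x + z, a + b) \<in> range (\<lambda>t. (t *\<^sub>R y, t * p y))" by (rule range_eqI)
next
  fix x a c assume "(x, a) \<in> range (\<lambda>t. (t *\<^sub>R y, t * p y))"
  then obtain t where "x = t *\<^sub>R y" "a = t * p y" by blast
  then have "(c *\<^sub>R x, c * a) = (\<lambda>t. (t *\<^sub>R y, t * p y)) (c * t)" by simp
  then show "(c *\<^sub>R x, c * a) \<in> range (\<lambda>t. (t *\<^sub>R y, t * p y))" by (rule range_eqI)
next
  fix x a assume "(x, a) \<in> range (\<lambda>t. (t *\<^sub>R y, t * p y))"
  then obtain t where x: "x = t *\<^sub>R y" and a: "a = t * p y" by blast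
  have phom: "\<And>t x. 0 \<le> t \<Longrightarrow> p (t *\<^sub>R x) = t * p x" using p unfolding sublinear_def by blast
  show "a \<le> p x"
  proof (cases "t \<ge> 0")
    case True
    then show ?thesis unfolding x a using phom by simp
  next
    case False
    have "p (y + - y) \<le> p y + p (- y)" using p unfolding sublinear_def by blast
    then have "0 \<le> p y + p (- y)" using sublinear_zero[OF p] by simp
    then have "(- t) * (- p y) \<le> (- t) * p (- y)" using False by (intro mult_left_mono) auto
    then have "t * p y \<le> (- t) * p (- y)" by simp
    also have "\<dots> = p ((- t) *\<^sub>R (- y))" by (rule phom[symmetric]) (use False in simp)
    finally show ?thesis unfolding x a by simp
  qed
qed

lemma linear_functional_of_total_graph:
  assumes p: "sublinear p" and M: "dominated_linear_graph p M" and total: "\<And>v. \<exists>a. (v, a) \<in> M"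
  shows "\<exists>\<phi>. linear \<phi> \<and> (\<forall>x. \<phi> x \<le> p x) \<and> (\<forall>v a. (v, a) \<in> M \<longrightarrow> \<phi> v = a)"
proof -
  define \<phi> where "\<phi> v = (SOME a. (v, a) \<in> M)" for v
  have \<phi>_graph: "(v, \<phi> v) \<in> M" for v unfolding \<phi>_def using total[of v] by (rule someI_ex)
  have \<phi>_eq: "(v, a) \<in> M \<Longrightarrow> \<phi> v = a" for v a
    using dominated_linear_graph_single_valued[OF p M \<phi>_graph] by blast
  have "(v + w, \<phi> v + \<phi> w) \<in> M" "(c *\<^sub>R v, c * \<phi> v) \<in> M" for v w c
    using M \<phi>_graph[of v] \<phi>_graph[of w] unfolding dominated_linear_graph_def by blast+
  then have "linear \<phi>" by (intro linearI) (simp_all add: \<phi>_eq)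
  moreover have "\<phi> x \<le> p x" for x using M \<phi>_graph unfolding dominated_linear_graph_def by blast
  ultimately show ?thesis using \<phi>_eq by blast
qed

lemma hahn_banach_sublinear:
  assumes p: "sublinear p"
  shows "\<exists>\<phi>. linear \<phi> \<and> (\<forall>x. \<phi> x \<le> p x) \<and> \<phi> y = p y"
proof -
  define R0 where "R0 = range (\<lambda>t. (t *\<^sub>R y, t * p y))"
  obtain M where M: "dominated_linear_graph p M" and "R0 \<subseteq> M"
    and M_max: "\<And>R. dominated_linear_graph p R \<Longrightarrow> M \<subseteq> R \<Longrightarrow> R = M"
    using dominated_linear_graph_maximal[OF dominated_linear_graph_line[OF p]] unfolding R0_def by blast
  have "(y, p y) \<in> R0" unfolding R0_def by (rule range_eqI[of _ _ 1]) simp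
  then have "(y, p y) \<in> M" using \<open>R0 \<subseteq> M\<close> by blast
  moreover have "\<exists>a. (v, a) \<in> M" for v
  proof (rule ccontr)
    assume "\<nexists>a. (v, a) \<in> M"
    then obtain R' where "dominated_linear_graph p R'" "M \<subset> R'"
      using dominated_linear_graph_extend[OF p M] \<open>(y, p y) \<in> M\<close> by blast
    then show False using M_max[of R'] by blast
  qed
  ultimately show ?thesis using linear_functional_of_total_graph[OF p M] by blast
qed

section \<open>Minkowski functionals and algebraic separation\<close>

definition absorbing :: "'v::real_vector set \<Rightarrow> bool" where
  "absorbing D \<longleftrightarrow> (\<forall>v. \<exists>e>0. e *\<^sub>R v \<in> D)"

definition minkowski_scalings :: "'v::real_vector set \<Rightarrow> 'v \<Rightarrow> real set" where
  "minkowski_scalings D v = {l. 0 < l \<and> inverse l *\<^sub>R v \<in> D}"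

definition minkowski_functional :: "'v::real_vector set \<Rightarrow> 'v \<Rightarrow> real" where
  "minkowski_functional D v = Inf (minkowski_scalings D v)"

lemma mem_minkowski_scalings [simp]: "l \<in> minkowski_scalings D v \<longleftrightarrow> 0 < l \<and> inverse l *\<^sub>R v \<in> D"
  unfolding minkowski_scalings_def by simp

lemma bdd_below_minkowski_scalings: "bdd_below (minkowski_scalings D v)"
  by (rule bdd_belowI[of _ 0]) simp

lemma convex_scaleR_mem:
  assumes "convex D" "0 \<in> D" "x \<in> D" "0 \<le> t" "t \<le> 1"
  shows "t *\<^sub>R x \<in> D"
  using convexD[OF assms(1,3,2), of t "1 - t"] assms(4,5) by simp

context
  fixes D :: "'v::real_vector set"
  assumes D: "convex D" "0 \<in> D" "absorbing D"
begin

lemma minkowski_scalings_nonempty: "minkowski_scalings D v \<noteq> {}"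
proof -
  obtain e where "e > 0" "e *\<^sub>R v \<in> D" using D(3) unfolding absorbing_def by blast
  then have "inverse e \<in> minkowski_scalings D v" by simp
  then show ?thesis by blast
qed

lemma minkowski_functional_scaleR:
  assumes "0 \<le> t"
  shows "minkowski_functional D (t *\<^sub>R v) = t * minkowski_functional D v"
proof (cases "t = 0")
  case True
  have "minkowski_scalings D 0 = {0<..}" using D(2) by auto
  then show ?thesis using True unfolding minkowski_functional_def by simp
next
  case False
  then have t: "t > 0" using assms by simp
  have "minkowski_scalings D (t *\<^sub>R v) = (*) t ` minkowski_scalings D v"
  proof (intro equalityI subsetI)
    fix l assume l: "l \<in> minkowski_scalings D (t *\<^sub>R v)"
    then have "l / t \<in> minkowski_scalings D v" using t by (simp add: field_simps)
    then show "l \<in> (*) t ` minkowski_scalings D v" using t by (intro image_eqI[of _ _ "l / t"]) auto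
  next
    fix l assume "l \<in> (*) t ` minkowski_scalings D v"
    then obtain m where "m \<in> minkowski_scalings D v" "l = t * m" by blast
    moreover have "inverse (t * m) *\<^sub>R (t *\<^sub>R v) = inverse m *\<^sub>R v" using t by simp
    ultimately show "l \<in> minkowski_scalings D (t *\<^sub>R v)" using t by (simp only: mem_minkowski_scalings) simp
  qed
  moreover have "t * Inf (minkowski_scalings D v) = Inf ((*) t ` minkowski_scalings D v)"
    using t minkowski_scalings_nonempty bdd_below_minkowski_scalings
    by (intro continuous_at_Inf_mono) (auto intro: monoI continuous_intros)
  ultimately show ?thesis unfolding minkowski_functional_def by simp
qed

lemma minkowski_functional_add:
  "minkowski_functional D (v + w) \<le> minkowski_functional D v + minkowski_functional D w"
proof -
  have sum_mem: "l + m \<in> minkowski_scalings D (v + w)" if "l \<in> minkowski_scalings D v" "m \<in> minkowski_scalings D w" for l m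
  proof -
    have "(l / (l + m)) *\<^sub>R (inverse l *\<^sub>R v) + (m / (l + m)) *\<^sub>R (inverse m *\<^sub>R w) \<in> D"
      using that by (intro convexD[OF D(1)]) (auto simp: add_divide_distrib[symmetric])
    then show ?thesis using that by (simp add: scaleR_add_right inverse_eq_divide)
  qed
  have "minkowski_functional D (v + w) \<le> l + m" if "l \<in> minkowski_scalings D v" "m \<in> minkowski_scalings D w" for l m
    unfolding minkowski_functional_def by (rule cInf_lower[OF sum_mem[OF that] bdd_below_minkowski_scalings])
  then have "minkowski_functional D (v + w) - m \<le> minkowski_functional D v" if "m \<in> minkowski_scalings D w" for m
    unfolding minkowski_functional_def[of D v] using that minkowski_scalings_nonempty
    by (intro cInf_greatest) (auto simp: algebra_simps)
  then have "minkowski_functional D (v + w) - minkowski_functional D v \<le> minkowski_functional D w"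
    unfolding minkowski_functional_def[of D w] using minkowski_scalings_nonempty
    by (intro cInf_greatest) (auto simp: algebra_simps)
  then show ?thesis by simp
qed

lemma sublinear_minkowski_functional: "sublinear (minkowski_functional D)"
  unfolding sublinear_def using minkowski_functional_add minkowski_functional_scaleR by blast

lemma minkowski_functional_le_one: "v \<in> D \<Longrightarrow> minkowski_functional D v \<le> 1"
  unfolding minkowski_functional_def by (rule cInf_lower[OF _ bdd_below_minkowski_scalings]) simp

lemma mem_if_minkowski_functional_less_one:
  assumes "minkowski_functional D v < 1"
  shows "v \<in> D"
proof -
  obtain l where "l \<in> minkowski_scalings D v" "l < 1"
    using cInf_lessD[OF minkowski_scalings_nonempty assms[unfolded minkowski_functional_def]] by blast
  then have "l *\<^sub>R (inverse l *\<^sub>R v) \<in> D"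
    using convex_scaleR_mem[OF D(1,2), of "inverse l *\<^sub>R v" l] by auto
  then show ?thesis using \<open>l \<in> minkowski_scalings D v\<close> by simp
qed

end

lemma separating_linear_functional:
  fixes K U :: "'v::real_vector set"
  assumes K: "convex K" "k0 \<in> K" and U: "convex U" "0 \<in> U" "absorbing U"
    and z: "\<And>k u. k \<in> K \<Longrightarrow> u \<in> U \<Longrightarrow> z \<noteq> k + u"
  shows "\<exists>\<phi>::'v \<Rightarrow> real. linear \<phi> \<and> (\<forall>u\<in>U. \<phi> u \<le> 1) \<and>
    (\<exists>\<delta>>0. \<forall>k\<in>K. \<phi> k + \<delta> \<le> \<phi> z)"
proof -
  define D where "D = {k - k0 + u | k u. k \<in> K \<and> u \<in> U}"
  have "U \<subseteq> D" unfolding D_def using K(2) by force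
  have "D = (\<lambda>x. x - k0) ` (\<Union>k\<in>K. \<Union>u\<in>U. {k + u})" unfolding D_def by force
  then have "convex D" using convex_sums[OF K(1) U(1)] by (simp add: convex_translation_subtract)
  have D: "convex D" "0 \<in> D" "absorbing D"
    using \<open>convex D\<close> \<open>U \<subseteq> D\<close> U(2,3) unfolding absorbing_def by blast+
  define y where "y = z - k0"
  have "y \<notin> D" using z unfolding D_def y_def by (force simp: algebra_simps)
  then have y: "minkowski_functional D y \<ge> 1"
    using mem_if_minkowski_functional_less_one[OF D] by force
  obtain \<phi> where \<phi>: "linear \<phi>" "\<And>x. \<phi> x \<le> minkowski_functional D x"
    and \<phi>y: "\<phi> y = minkowski_functional D y"
    using hahn_banach_sublinear[OF sublinear_minkowski_functional[OF D]] by blast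
  have \<phi>_D: "\<phi> x \<le> 1" if "x \<in> D" for x
    using \<phi>(2)[of x] minkowski_functional_le_one[OF D that] by linarith
  obtain e where e: "e > 0" "e *\<^sub>R y \<in> U" using U(3) unfolding absorbing_def by blast
  have "\<phi> k + e \<le> \<phi> z" if "k \<in> K" for k
  proof -
    have "k - k0 + e *\<^sub>R y \<in> D" unfolding D_def using that e by blast
    from \<phi>_D[OF this] have "\<phi> k - \<phi> k0 + e * \<phi> y \<le> 1"
      using \<phi>(1) by (simp add: linear_add linear_diff linear_scale)
    moreover have "\<phi> z = \<phi> k0 + \<phi> y" using \<phi>(1) unfolding y_def by (simp add: linear_diff)
    moreover have "0 \<le> (\<phi> y - 1) * (1 + e)" using y \<phi>y e by simp
    ultimately show ?thesis by (simp add: algebra_simps)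
  qed
  moreover have "\<forall>u\<in>U. \<phi> u \<le> 1" using \<phi>_D \<open>U \<subseteq> D\<close> by blast
  ultimately show ?thesis using \<phi>(1) e(1) by blast
qed

section \<open>Locally convex spaces and continuous affine minorants\<close>

lemma lcs_continuous_affine:
  assumes "lcs TYPE('a::{real_vector,t2_space})"
  shows "continuous_on UNIV (\<lambda>w::'a. c *\<^sub>R w + d)"
proof -
  have scale: "continuous_on UNIV (\<lambda>p::real \<times> 'a. fst p *\<^sub>R snd p)"
    and add: "continuous_on UNIV (\<lambda>p::'a \<times> 'a. fst p + snd p)"
    using assms unfolding lcs_def by blast+
  have "continuous_on UNIV (\<lambda>w::'a. c *\<^sub>R w)"
    using continuous_on_compose2[OF scale, of UNIV "\<lambda>w. (c, w)"] by (simp add: continuous_on_Pair)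
  then show ?thesis
    using continuous_on_compose2[OF add, of UNIV "\<lambda>w. (c *\<^sub>R w, d)"] by (simp add: continuous_on_Pair)
qed

lemma lcs_continuous_line:
  assumes "lcs TYPE('a::{real_vector,t2_space})"
  shows "continuous_on UNIV (\<lambda>t::real. t *\<^sub>R u + (d::'a))"
proof -
  have scale: "continuous_on UNIV (\<lambda>p::real \<times> 'a. fst p *\<^sub>R snd p)"
    and add: "continuous_on UNIV (\<lambda>p::'a \<times> 'a. fst p + snd p)"
    using assms unfolding lcs_def by blast+
  have "continuous_on UNIV (\<lambda>t::real. t *\<^sub>R u)"
    using continuous_on_compose2[OF scale, of UNIV "\<lambda>t. (t, u)"] by (simp add: continuous_on_Pair)
  then show ?thesis
    using continuous_on_compose2[OF add, of UNIV "\<lambda>t. (t *\<^sub>R u, d)"] by (simp add: continuous_on_Pair)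
qed

lemma lcs_open_affine_vimage:
  assumes "lcs TYPE('a::{real_vector,t2_space})" and "open V"
  shows "open {w::'a. c *\<^sub>R w + d \<in> V}"
  using continuous_open_preimage[OF lcs_continuous_affine[OF assms(1)] open_UNIV assms(2)]
  by (simp add: vimage_def)

lemma open_nbhd_absorbs:
  fixes U :: "'a::{real_vector,topological_space} set"
  assumes line: "continuous_on UNIV (\<lambda>t::real. t *\<^sub>R v)" and "open U" "0 \<in> U"
  shows "\<exists>e>0. e *\<^sub>R v \<in> U"
proof -
  have "open ((\<lambda>t::real. t *\<^sub>R v) -` U)"
    using continuous_open_preimage[OF line open_UNIV \<open>open U\<close>] by simp
  moreover have "0 \<in> (\<lambda>t::real. t *\<^sub>R v) -` U" using \<open>0 \<in> U\<close> by simp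
  ultimately obtain e where "e > 0" "ball 0 e \<subseteq> (\<lambda>t::real. t *\<^sub>R v) -` U"
    by (meson openE)
  moreover have "e / 2 \<in> ball 0 e" using \<open>e > 0\<close> by simp
  ultimately have "(e / 2) *\<^sub>R v \<in> U" by blast
  then show ?thesis using \<open>e > 0\<close> by (intro exI[of _ "e / 2"]) simp
qed

lemma lcs_open_absorbing:
  assumes "lcs TYPE('a::{real_vector,t2_space})" and "open U" "(0::'a) \<in> U"
  shows "absorbing U"
proof -
  have "continuous_on UNIV (\<lambda>t::real. t *\<^sub>R v)" for v :: 'a
    using lcs_continuous_line[OF assms(1), of v 0] by simp
  then show ?thesis unfolding absorbing_def using open_nbhd_absorbs assms(2,3) by blast
qed

lemma absorbing_Times:
  assumes A: "convex A" "0 \<in> A" "absorbing A" and B: "convex B" "0 \<in> B" "absorbing B"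
  shows "absorbing (A \<times> B)"
  unfolding absorbing_def
proof
  fix p :: "'a \<times> 'b"
  obtain e1 e2 where e1: "e1 > 0" "e1 *\<^sub>R fst p \<in> A" and e2: "e2 > 0" "e2 *\<^sub>R snd p \<in> B"
    using A(3) B(3) unfolding absorbing_def by blast
  define e where "e = min e1 e2"
  have "(e / e1) *\<^sub>R (e1 *\<^sub>R fst p) \<in> A"
    by (rule convex_scaleR_mem[OF A(1,2) e1(2)]) (use e1(1) e2(1) in \<open>auto simp: e_def\<close>)
  moreover have "(e / e2) *\<^sub>R (e2 *\<^sub>R snd p) \<in> B"
    by (rule convex_scaleR_mem[OF B(1,2) e2(2)]) (use e1(1) e2(1) in \<open>auto simp: e_def\<close>)
  moreover have "e > 0" using e1(1) e2(1) unfolding e_def by simp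
  ultimately show "\<exists>e>0. e *\<^sub>R p \<in> A \<times> B"
    using e1(1) e2(1) by (intro exI[of _ e]) (simp add: mem_Times_iff)
qed

lemma lcs_linear_continuous_if_bounded:
  assumes L: "lcs TYPE('a::{real_vector,t2_space})" and \<phi>: "linear (\<phi>::'a \<Rightarrow> real)"
    and U: "open U" "0 \<in> U" "\<And>u. u \<in> U \<Longrightarrow> \<phi> u \<le> 1"
  shows "continuous_on UNIV \<phi>"
proof -
  have nbhd: "\<exists>T. open T \<and> v \<in> T \<and> T \<subseteq> \<phi> -` B" if "open B" "v \<in> \<phi> -` B" for B v
  proof -
    obtain e where e: "e > 0" "ball (\<phi> v) e \<subseteq> B" using \<open>open B\<close> \<open>v \<in> \<phi> -` B\<close> by (meson openE vimageE)
    define c where "c = 2 / e"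
    have c: "c > 0" using e unfolding c_def by simp
    \<comment> \<open>T = v + (U \<inter> - U) / c, on which \<phi> differs from \<phi> v by at most 1 / c < e.\<close>
    define T where "T = {w. c *\<^sub>R w + (- c *\<^sub>R v) \<in> U} \<inter> {w. (- c) *\<^sub>R w + c *\<^sub>R v \<in> U}"
    have "open T" unfolding T_def by (intro open_Int lcs_open_affine_vimage[OF L U(1)])
    moreover have "v \<in> T" unfolding T_def using U(2) by simp
    moreover have "T \<subseteq> \<phi> -` B"
    proof
      fix w assume "w \<in> T"
      then have "\<phi> (c *\<^sub>R w + (- c *\<^sub>R v)) \<le> 1" "\<phi> ((- c) *\<^sub>R w + c *\<^sub>R v) \<le> 1"
        using U(3) unfolding T_def by auto
      then have "c * (\<phi> w - \<phi> v) \<le> 1" "c * (\<phi> v - \<phi> w) \<le> 1"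
        using \<phi> by (simp_all add: linear_diff linear_scale algebra_simps)
      then have "\<bar>\<phi> w - \<phi> v\<bar> < e" using c e unfolding c_def by (simp add: field_simps abs_less_iff)
      then show "w \<in> \<phi> -` B" using e(2) by (auto simp: dist_real_def)
    qed
    ultimately show ?thesis by blast
  qed
  have "open (\<phi> -` B)" if "open B" for B
    by (rule topological_space_class.openI) (use nbhd that in blast)
  then show ?thesis by (simp add: continuous_on_open_vimage[OF open_UNIV])
qed

lemma dual_add: "a \<in> dual \<Longrightarrow> b \<in> dual \<Longrightarrow> (\<lambda>x. a x + b x) \<in> dual"
  unfolding dual_def by (auto intro: linear_compose_add continuous_on_add)

lemma dual_scale: "a \<in> dual \<Longrightarrow> (\<lambda>x. c * a x) \<in> dual"
  unfolding dual_def by (auto simp: linear_iff algebra_simps intro: continuous_on_mult_left)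

lemma dual_zero: "(\<lambda>x. 0) \<in> dual"
  unfolding dual_def by (simp add: linear_zero)

lemma Gamma_not_MInfty: "\<phi> \<in> Gamma \<Longrightarrow> \<phi> x \<noteq> -\<infinity>"
  unfolding Gamma_def by blast

lemma Gamma_finite_point:
  assumes "\<phi> \<in> Gamma"
  shows "\<exists>x a. \<phi> x = ereal a"
proof -
  obtain x where "\<phi> x \<noteq> \<infinity>" using assms unfolding Gamma_def by blast
  moreover have "\<phi> x \<noteq> -\<infinity>" using assms unfolding Gamma_def by blast
  ultimately show ?thesis by (cases "\<phi> x") auto
qed

lemma Gamma_convex_bound:
  assumes "\<phi> \<in> Gamma" "\<phi> x \<le> ereal a" "\<phi> y \<le> ereal b" "0 \<le> t" "t \<le> 1"
  shows "\<phi> ((1 - t) *\<^sub>R x + t *\<^sub>R y) \<le> ereal ((1 - t) * a + t * b)"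
proof -
  have convex: "\<forall>t\<in>{0<..<1::real}. \<phi> ((1 - t) *\<^sub>R x + t *\<^sub>R y) \<le> ereal (1 - t) * \<phi> x + ereal t * \<phi> y"
    using assms(1) unfolding Gamma_def by blast
  consider "t = 0" | "t = 1" | "0 < t \<and> t < 1" using assms by linarith
  then show ?thesis
  proof cases
    case 3
    then have "\<phi> ((1 - t) *\<^sub>R x + t *\<^sub>R y) \<le> ereal (1 - t) * \<phi> x + ereal t * \<phi> y"
      using convex by simp
    also have "\<dots> \<le> ereal (1 - t) * ereal a + ereal t * ereal b"
      using 3 assms(2,3) by (intro add_mono ereal_mult_left_mono) auto
    finally show ?thesis by simp
  qed (use assms(2,3) in simp_all)
qed

lemma convex_epigraph_Gamma:
  assumes "\<phi> \<in> Gamma"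
  shows "convex {p. \<phi> (fst p) \<le> ereal (snd p)}"
proof (rule convexI)
  fix p q :: "'a \<times> real" and a b :: real
  assume "p \<in> {p. \<phi> (fst p) \<le> ereal (snd p)}" "q \<in> {p. \<phi> (fst p) \<le> ereal (snd p)}"
    and "0 \<le> a" "0 \<le> b" "a + b = 1"
  moreover have "a = 1 - b" using \<open>a + b = 1\<close> by simp
  ultimately have "\<phi> ((1 - b) *\<^sub>R fst p + b *\<^sub>R fst q) \<le> ereal ((1 - b) * snd p + b * snd q)"
    by (intro Gamma_convex_bound[OF assms]) simp_all
  then show "a *\<^sub>R p + b *\<^sub>R q \<in> {p. \<phi> (fst p) \<le> ereal (snd p)}"
    using \<open>a = 1 - b\<close> by simp
qed

definition affine_minorant ::
    "('a::{real_vector,topological_space} \<Rightarrow> ereal) \<Rightarrow> ('a \<Rightarrow> real) \<Rightarrow> real \<Rightarrow> bool" where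
  "affine_minorant \<phi> b \<beta> \<longleftrightarrow> b \<in> dual \<and> (\<forall>y. ereal (b y - \<beta>) \<le> \<phi> y)"

lemma Gamma_epigraph_linear_separation:
  fixes \<phi> :: "'a::{real_vector,t2_space} \<Rightarrow> ereal"
  assumes L: "lcs TYPE('a)" and G: "\<phi> \<in> Gamma" and r: "ereal r < \<phi> x"
  shows "\<exists>(\<Phi>::'a \<times> real \<Rightarrow> real) V \<delta>. linear \<Phi> \<and> open V \<and> 0 \<in> V \<and> (\<forall>v\<in>V. \<Phi> (v, 0) \<le> 1) \<and>
    0 < \<delta> \<and> (\<forall>y s. \<phi> y \<le> ereal s \<longrightarrow> \<Phi> (y, s) + \<delta> \<le> \<Phi> (x, r))"
proof -
  obtain c0 where c0: "ereal r < ereal c0" "ereal c0 < \<phi> x" using ereal_dense2[OF r] by blast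
  define m where "m = c0 - r"
  have m: "m > 0" using c0 unfolding m_def by simp
  define W where "W = - {y. \<phi> y \<le> ereal c0}"
  have "closed {y. \<phi> y \<le> ereal c0}" using G unfolding Gamma_def by blast
  then have "open {w. (- 1) *\<^sub>R w + x \<in> W}" unfolding W_def by (intro lcs_open_affine_vimage[OF L]) auto
  moreover have "0 \<in> {w. (- 1) *\<^sub>R w + x \<in> W}" using c0 unfolding W_def by simp
  ultimately obtain V where V: "open V" "convex V" "0 \<in> V" "V \<subseteq> {w. (- 1) *\<^sub>R w + x \<in> W}"
    using L unfolding lcs_def by meson
  define E where "E = {p. \<phi> (fst p) \<le> ereal (snd p)}"
  obtain x0 s0 where "\<phi> x0 = ereal s0" using Gamma_finite_point[OF G] by blast
  then have "(x0, s0) \<in> E" unfolding E_def by simp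
  define U where "U = V \<times> {-m<..<m}"
  have "absorbing {-m<..<m}"
    unfolding absorbing_def using m by (intro allI open_nbhd_absorbs) (auto intro: continuous_intros)
  then have U_absorbing: "absorbing U"
    unfolding U_def using m by (intro absorbing_Times V(2,3) lcs_open_absorbing[OF L V(1,3)]) auto
  have U_convex: "convex U" unfolding U_def by (rule convex_Times[OF V(2)]) (simp add: convex_real_interval)
  have U_0: "0 \<in> U" unfolding U_def zero_prod_def using V(3) m by simp
  have disjoint: "(x, r) \<noteq> k + u" if "k \<in> E" "u \<in> U" for k u
  proof
    assume "(x, r) = k + u"
    then have "fst k = x - fst u" "snd k = r - snd u" by (simp_all add: prod_eq_iff)
    moreover have "fst u \<in> V" "\<bar>snd u\<bar> < m" using \<open>u \<in> U\<close> unfolding U_def by auto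
    ultimately have "ereal c0 < \<phi> (fst k)" "snd k < c0"
      using V(4) unfolding W_def m_def by auto
    moreover have "\<phi> (fst k) \<le> ereal (snd k)" using \<open>k \<in> E\<close> unfolding E_def by simp
    ultimately have "\<phi> (fst k) < \<phi> (fst k)" by (meson ereal_less_eq(3) le_less_trans less_imp_le)
    then show False by simp
  qed
  obtain \<Phi> :: "'a \<times> real \<Rightarrow> real" and \<delta> where \<Phi>: "linear \<Phi>" "\<forall>u\<in>U. \<Phi> u \<le> 1" "\<delta> > 0"
    "\<forall>k\<in>E. \<Phi> k + \<delta> \<le> \<Phi> (x, r)"
    using separating_linear_functional[OF convex_epigraph_Gamma[OF G, folded E_def] \<open>(x0, s0) \<in> E\<close>
        U_convex U_0 U_absorbing disjoint]
    by blast
  have "\<forall>v\<in>V. \<Phi> (v, 0) \<le> 1" using \<Phi>(2) m unfolding U_def by simp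
  moreover have "\<forall>y s. \<phi> y \<le> ereal s \<longrightarrow> \<Phi> (y, s) + \<delta> \<le> \<Phi> (x, r)" using \<Phi>(4) unfolding E_def by simp
  ultimately show ?thesis using \<Phi>(1,3) V(1,3) by (intro exI[of _ \<Phi>] exI[of _ V] exI[of _ \<delta>]) simp
qed

lemma linear_on_prod_real:
  fixes \<Phi> :: "'a::real_vector \<times> real \<Rightarrow> real"
  assumes "linear \<Phi>"
  shows "\<Phi> (y, s) = \<Phi> (y, 0) + s * \<Phi> (0, 1)" and "linear (\<lambda>y. \<Phi> (y, 0))"
proof -
  show "\<Phi> (y, s) = \<Phi> (y, 0) + s * \<Phi> (0, 1)"
    using linear_add[OF assms, of "(y, 0)" "s *\<^sub>R (0, 1)"] linear_scale[OF assms, of s "(0, 1)"] by simp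
  have "linear (\<lambda>y::'a. (y, 0::real))" by (rule linearI) simp_all
  then show "linear (\<lambda>y. \<Phi> (y, 0))" using linear_compose[OF _ assms] unfolding comp_def by blast
qed

lemma Gamma_separation_below_epigraph:
  fixes \<phi> :: "'a::{real_vector,t2_space} \<Rightarrow> ereal"
  assumes L: "lcs TYPE('a)" and G: "\<phi> \<in> Gamma" and r: "ereal r < \<phi> x"
  shows "\<exists>b c \<delta>. b \<in> dual \<and> 0 \<le> c \<and> 0 < \<delta> \<and>
    (\<forall>y s. \<phi> y \<le> ereal s \<longrightarrow> b y - c * s + \<delta> \<le> b x - c * r)"
proof -
  obtain \<Phi> :: "'a \<times> real \<Rightarrow> real" and V \<delta> where \<Phi>: "linear \<Phi>" and V: "open V" "0 \<in> V"
    "\<forall>v\<in>V. \<Phi> (v, 0) \<le> 1" and "0 < \<delta>"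
    and sep: "\<And>y s. \<phi> y \<le> ereal s \<Longrightarrow> \<Phi> (y, s) + \<delta> \<le> \<Phi> (x, r)"
    using Gamma_epigraph_linear_separation[OF L G r] by blast
  define b where "b y = \<Phi> (y, 0)" for y
  define c where "c = - \<Phi> (0, 1)"
  have \<Phi>_eq: "\<Phi> (y, s) = b y - c * s" for y s
    unfolding b_def c_def using linear_on_prod_real(1)[OF \<Phi>, of y s] by simp
  have "continuous_on UNIV b"
    unfolding b_def using V(3) by (intro lcs_linear_continuous_if_bounded[OF L linear_on_prod_real(2)[OF \<Phi>] V(1,2)]) blast
  then have "b \<in> dual" unfolding dual_def b_def using linear_on_prod_real(2)[OF \<Phi>] by simp
  moreover have "0 \<le> c"
  proof (rule ccontr)
    assume "\<not> 0 \<le> c"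
    obtain x0 s0 where s0: "\<phi> x0 = ereal s0" using Gamma_finite_point[OF G] by blast
    define s where "s = max s0 ((\<Phi> (x, r) - b x0) / (- c))"
    have "\<phi> x0 \<le> ereal s" using s0 unfolding s_def by simp
    from sep[OF this] have lt: "(- c) * s < \<Phi> (x, r) - b x0" using \<open>0 < \<delta>\<close> unfolding \<Phi>_eq by simp
    have "0 < - c" using \<open>\<not> 0 \<le> c\<close> by simp
    moreover have "(\<Phi> (x, r) - b x0) / (- c) \<le> s" unfolding s_def by simp
    ultimately have "\<Phi> (x, r) - b x0 \<le> s * (- c)" using pos_divide_le_eq by blast
    with lt show False by (simp add: mult.commute)
  qed
  moreover have "\<forall>y s. \<phi> y \<le> ereal s \<longrightarrow> b y - c * s + \<delta> \<le> b x - c * r"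
    using sep unfolding \<Phi>_eq by blast
  ultimately show ?thesis using \<open>0 < \<delta>\<close> by blast
qed

lemma affine_minorant_of_separation:
  assumes b: "b \<in> dual" and "c > 0" "\<delta> > 0"
    and sep: "\<forall>y s. \<phi> y \<le> ereal s \<longrightarrow> b y - c * s + \<delta> \<le> b x - c * r"
    and not_MInfty: "\<And>y. \<phi> y \<noteq> -\<infinity>"
  shows "\<exists>b' \<beta>. affine_minorant \<phi> b' \<beta> \<and> r < b' x - \<beta>"
proof -
  define \<beta> where "\<beta> = b x / c - r - \<delta> / c"
  have "ereal (b y / c - \<beta>) \<le> \<phi> y" for y
  proof (cases "\<phi> y")
    case (real s)
    then have "b y - c * s + \<delta> \<le> b x - c * r" using sep by simp
    then have "b y - b x + c * r + \<delta> \<le> c * s" by simp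
    moreover have "b y / c - \<beta> = (b y - b x + c * r + \<delta>) / c"
      unfolding \<beta>_def using \<open>c > 0\<close> by (simp add: field_simps)
    ultimately have "b y / c - \<beta> \<le> s" using \<open>c > 0\<close> by (simp add: pos_divide_le_eq mult.commute)
    then show ?thesis using real by simp
  qed (use not_MInfty in auto)
  moreover have "(\<lambda>y. (1 / c) * b y) \<in> dual" by (rule dual_scale[OF b])
  moreover have "r < b x / c - \<beta>" unfolding \<beta>_def using \<open>c > 0\<close> \<open>\<delta> > 0\<close> by simp
  ultimately show ?thesis unfolding affine_minorant_def by (intro exI[of _ "\<lambda>y. (1 / c) * b y"] exI[of _ \<beta>]) auto
qed

lemma Gamma_has_affine_minorant:
  fixes \<phi> :: "'a::{real_vector,t2_space} \<Rightarrow> ereal"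
  assumes L: "lcs TYPE('a)" and G: "\<phi> \<in> Gamma"
  shows "\<exists>b \<beta>. affine_minorant \<phi> b \<beta>"
proof -
  obtain x0 s0 where s0: "\<phi> x0 = ereal s0" using Gamma_finite_point[OF G] by blast
  then have "ereal (s0 - 1) < \<phi> x0" by simp
  then obtain b c \<delta> where b: "b \<in> dual" "0 \<le> c" "0 < \<delta>"
    and sep: "\<forall>y s. \<phi> y \<le> ereal s \<longrightarrow> b y - c * s + \<delta> \<le> b x0 - c * (s0 - 1)"
    using Gamma_separation_below_epigraph[OF L G] by blast
  have "b x0 - c * s0 + \<delta> \<le> b x0 - c * (s0 - 1)" using sep s0 by simp
  then have "c > 0" using \<open>0 < \<delta>\<close> by (simp add: algebra_simps)
  then show ?thesis using affine_minorant_of_separation[OF b(1) _ b(3) sep Gamma_not_MInfty[OF G]] by blast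
qed

lemma Gamma_affine_minorant_above:
  fixes \<phi> :: "'a::{real_vector,t2_space} \<Rightarrow> ereal"
  assumes L: "lcs TYPE('a)" and G: "\<phi> \<in> Gamma" and r: "ereal r < \<phi> x"
  shows "\<exists>b \<beta>. affine_minorant \<phi> b \<beta> \<and> r < b x - \<beta>"
proof -
  obtain b c \<delta> where b: "b \<in> dual" "0 \<le> c" "0 < \<delta>"
    and sep: "\<forall>y s. \<phi> y \<le> ereal s \<longrightarrow> b y - c * s + \<delta> \<le> b x - c * r"
    using Gamma_separation_below_epigraph[OF L G r] by blast
  show ?thesis
  proof (cases "c > 0")
    case True
    then show ?thesis using affine_minorant_of_separation[OF b(1) _ b(3) sep Gamma_not_MInfty[OF G]] by blast
  next
    case False
    \<comment> \<open>A vertical hyperplane: tilt some affine minorant by a large multiple of b.\<close>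
    have dom: "b y + \<delta> \<le> b x" if fin: "\<phi> y \<noteq> \<infinity>" for y
    proof -
      obtain s where "\<phi> y = ereal s" using fin Gamma_not_MInfty[OF G, of y] by (cases "\<phi> y") auto
      then show ?thesis using sep[rule_format, of y s] b(2) False by simp
    qed
    obtain b0 \<beta>0 where b0: "affine_minorant \<phi> b0 \<beta>0" using Gamma_has_affine_minorant[OF L G] by blast
    define \<mu> where "\<mu> = max 0 ((r - (b0 x - \<beta>0)) / \<delta>) + 1"
    have \<mu>: "0 \<le> \<mu>" "r - (b0 x - \<beta>0) < \<mu> * \<delta>"
      using b(3) unfolding \<mu>_def by (auto simp: field_simps max_def)
    have "ereal (b0 y + \<mu> * b y - (\<beta>0 + \<mu> * (b x - \<delta>))) \<le> \<phi> y" for y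
    proof (cases "\<phi> y")
      case (real s)
      have "b y + \<delta> \<le> b x" using dom real by simp
      then have "\<mu> * (b y - (b x - \<delta>)) \<le> 0" using \<mu>(1) by (simp add: mult_nonneg_nonpos)
      moreover have "ereal (b0 y - \<beta>0) \<le> \<phi> y" using b0 unfolding affine_minorant_def by blast
      ultimately show ?thesis using real by (simp add: algebra_simps)
    qed (use Gamma_not_MInfty[OF G] in auto)
    moreover have "(\<lambda>y. b0 y + \<mu> * b y) \<in> dual"
      using b0 b(1) unfolding affine_minorant_def by (intro dual_add dual_scale) auto
    moreover have "r < b0 x + \<mu> * b x - (\<beta>0 + \<mu> * (b x - \<delta>))" using \<mu>(2) by (simp add: algebra_simps)
    ultimately show ?thesis unfolding affine_minorant_def
      by (intro exI[of _ "\<lambda>y. b0 y + \<mu> * b y"] exI[of _ "\<beta>0 + \<mu> * (b x - \<delta>)"]) auto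
  qed
qed

section \<open>Recession functions\<close>

definition recession_at :: "('a::real_vector \<Rightarrow> ereal) \<Rightarrow> 'a \<Rightarrow> 'a \<Rightarrow> ereal" where
  "recession_at \<phi> v u = (SUP t\<in>{0<..}. (\<phi> (v + t *\<^sub>R u) - \<phi> v) / ereal t)"

lemma ereal_diff_quotient_le_iff:
  assumes "0 < t" "x \<noteq> -\<infinity>"
  shows "(x - ereal a) / ereal t \<le> ereal L \<longleftrightarrow> x \<le> ereal (a + t * L)"
  using assms by (cases x) (auto simp: field_simps)

lemma recession_at_le_iff:
  assumes "\<phi> v = ereal a" "\<And>y. \<phi> y \<noteq> -\<infinity>"
  shows "recession_at \<phi> v u \<le> ereal L \<longleftrightarrow> (\<forall>t>0. \<phi> (v + t *\<^sub>R u) \<le> ereal (a + t * L))"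
  unfolding recession_at_def SUP_le_iff using assms by (simp add: ereal_diff_quotient_le_iff Ball_def)

lemma recession_at_zero: "\<phi> v = ereal a \<Longrightarrow> recession_at \<phi> v 0 = 0"
  unfolding recession_at_def by (simp add: zero_ereal_def)

lemma Gamma_diff_quotient_mono:
  assumes G: "\<phi> \<in> Gamma" and a: "\<phi> v = ereal a" and "0 < s" "s \<le> t"
  shows "(\<phi> (v + s *\<^sub>R u) - \<phi> v) / ereal s \<le> (\<phi> (v + t *\<^sub>R u) - \<phi> v) / ereal t"
proof (cases "\<phi> (v + t *\<^sub>R u)")
  case (real b)
  have t: "t > 0" using assms by simp
  have "(1 - s / t) *\<^sub>R v + (s / t) *\<^sub>R (v + t *\<^sub>R u) = v + s *\<^sub>R u"
    using t by (simp add: algebra_simps)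
  then have "\<phi> (v + s *\<^sub>R u) \<le> ereal ((1 - s / t) * a + (s / t) * b)"
    using Gamma_convex_bound[OF G, of v a "v + t *\<^sub>R u" b "s / t"] a real assms(3,4) t by simp
  also have "(1 - s / t) * a + (s / t) * b = a + s * ((b - a) / t)" using t by (simp add: field_simps)
  finally have "(\<phi> (v + s *\<^sub>R u) - \<phi> v) / ereal s \<le> ereal ((b - a) / t)"
    using a Gamma_not_MInfty[OF G] \<open>0 < s\<close> by (simp add: ereal_diff_quotient_le_iff)
  then show ?thesis using real a t by simp
qed (use assms Gamma_not_MInfty[OF G] in auto)

lemma Lim_at_top_eq_SUP_mono:
  fixes q :: "real \<Rightarrow> ereal"
  assumes mono: "\<And>s t. 0 < s \<Longrightarrow> s \<le> t \<Longrightarrow> q s \<le> q t"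
  shows "Lim at_top q = (SUP t\<in>{0<..}. q t)"
proof (rule tendsto_Lim[OF trivial_limit_at_top_linorder], rule order_tendstoI)
  fix a assume "a < (SUP t\<in>{0<..}. q t)"
  then obtain t0 where t0: "t0 > 0" "a < q t0" by (auto simp: less_SUP_iff)
  show "eventually (\<lambda>t. a < q t) at_top"
    using eventually_ge_at_top[of t0] by eventually_elim (use t0 mono in \<open>blast intro: less_le_trans\<close>)
next
  fix a assume a: "(SUP t\<in>{0<..}. q t) < a"
  show "eventually (\<lambda>t. q t < a) at_top"
    using eventually_gt_at_top[of 0]
  proof eventually_elim
    case (elim t)
    have "q t \<le> (SUP t\<in>{0<..}. q t)" by (rule SUP_upper) (use elim in simp)
    then show ?case using a by (rule le_less_trans)
  qed
qed

lemma Gamma_ray_bound_shift: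
  fixes \<phi> :: "'a::{real_vector,t2_space} \<Rightarrow> ereal"
  assumes L: "lcs TYPE('a)" and G: "\<phi> \<in> Gamma" and a1: "\<phi> v1 = ereal a1"
    and ray: "\<And>t. 0 < t \<Longrightarrow> \<phi> (v0 + t *\<^sub>R u) \<le> ereal (a0 + t * M)" and "0 < s"
  shows "\<phi> (v1 + s *\<^sub>R u) \<le> ereal (a1 + s * M)"
proof (rule ereal_le_epsilon2)
  fix e :: real assume "0 < e"
  define c where "c = a1 + s * M + e"
  define g where "g l = l *\<^sub>R (v0 - v1) + (v1 + s *\<^sub>R u)" for l
  define d where "d = min 1 (e / (\<bar>a0 - a1\<bar> + 1))"
  have d: "0 < d" "d \<le> 1" "d \<le> e / (\<bar>a0 - a1\<bar> + 1)"
    using \<open>0 < e\<close> unfolding d_def by auto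
  \<comment> \<open>v1 + s u is the limit, as l tends to 0, of the convex combinations
     (1 - l) v1 + l (v0 + (s / l) u), on which \<phi> stays below c.\<close>
  have ev: "eventually (\<lambda>l. g l \<in> {w. \<phi> w \<le> ereal c}) (at_right 0)"
    using eventually_at_right_real[OF d(1)]
  proof eventually_elim
    case (elim l)
    then have l: "0 < l" "l < 1" using d by auto
    have "\<phi> ((1 - l) *\<^sub>R v1 + l *\<^sub>R (v0 + (s / l) *\<^sub>R u)) \<le> ereal ((1 - l) * a1 + l * (a0 + (s / l) * M))"
      by (rule Gamma_convex_bound[OF G]) (use a1 ray[of "s / l"] \<open>0 < s\<close> l in auto)
    moreover have "(1 - l) *\<^sub>R v1 + l *\<^sub>R (v0 + (s / l) *\<^sub>R u) = g l"
      using l unfolding g_def by (simp add: algebra_simps)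
    moreover have "(1 - l) * a1 + l * (a0 + (s / l) * M) = a1 + s * M + l * (a0 - a1)"
      using l by (simp add: field_simps)
    moreover have "l * (a0 - a1) \<le> e"
    proof -
      have "l * (a0 - a1) \<le> l * (\<bar>a0 - a1\<bar> + 1)" using l by (intro mult_left_mono) auto
      also have "\<dots> \<le> d * (\<bar>a0 - a1\<bar> + 1)" using elim by (intro mult_right_mono) auto
      finally show ?thesis using d(3) by (simp add: pos_le_divide_eq)
    qed
    ultimately have "\<phi> (g l) \<le> ereal c" unfolding c_def by (metis add_left_mono ereal_less_eq(3) order_trans)
    then show ?case by simp
  qed
  have closed: "closed {w. \<phi> w \<le> ereal c}" using G unfolding Gamma_def by blast
  have "continuous_on UNIV g" unfolding g_def by (rule lcs_continuous_line[OF L])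
  then have "isCont g 0" using continuous_on_eq_continuous_at[OF open_UNIV] by blast
  then have "(g \<longlongrightarrow> g 0) (at_right 0)" unfolding isCont_def by (rule tendsto_mono[OF at_le, rotated]) simp
  then have "g 0 \<in> {w. \<phi> w \<le> ereal c}" by (rule Lim_in_closed_set[OF closed ev, rotated]) simp
  then show "\<phi> (v1 + s *\<^sub>R u) \<le> ereal (a1 + s * M) + ereal e" unfolding g_def c_def by simp
qed

lemma recession_at_base_point:
  fixes \<phi> :: "'a::{real_vector,t2_space} \<Rightarrow> ereal"
  assumes L: "lcs TYPE('a)" and G: "\<phi> \<in> Gamma" and "\<phi> v0 = ereal a0" "\<phi> v1 = ereal a1"
  shows "recession_at \<phi> v1 u = recession_at \<phi> v0 u"
proof -
  have "recession_at \<phi> w' u \<le> ereal M" if "recession_at \<phi> w u \<le> ereal M"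
    and "\<phi> w = ereal b" "\<phi> w' = ereal b'" for w w' b b' M
    using that Gamma_ray_bound_shift[OF L G, of w' b' w u b M]
    by (auto simp: recession_at_le_iff Gamma_not_MInfty[OF G])
  then show ?thesis using assms(3,4) by (metis ereal_le_real antisym)
qed

lemma recession_eq_recession_at:
  fixes \<phi> :: "'a::{real_vector,t2_space} \<Rightarrow> ereal"
  assumes L: "lcs TYPE('a)" and G: "\<phi> \<in> Gamma" and v: "\<phi> v = ereal a"
  shows "recession \<phi> = recession_at \<phi> v"
proof
  fix u
  define v0 where "v0 = (SOME v0. v0 \<in> edom \<phi>)"
  have "v \<in> edom \<phi>" unfolding edom_def using v by simp
  then have "\<phi> v0 < \<infinity>" unfolding v0_def edom_def by (rule someI2) simp
  then obtain a0 where a0: "\<phi> v0 = ereal a0" using Gamma_not_MInfty[OF G] by (cases "\<phi> v0") auto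
  have "recession \<phi> u = Lim at_top (\<lambda>t. (\<phi> (v0 + t *\<^sub>R u) - \<phi> v0) / ereal t)"
    unfolding recession_def v0_def Let_def ..
  also have "\<dots> = recession_at \<phi> v0 u"
    unfolding recession_at_def by (rule Lim_at_top_eq_SUP_mono) (rule Gamma_diff_quotient_mono[OF G a0])
  also have "\<dots> = recession_at \<phi> v u" by (rule recession_at_base_point[OF L G v a0])
  finally show "recession \<phi> u = recession_at \<phi> v u" .
qed

lemma affine_minorant_le_recession_at:
  assumes b: "affine_minorant \<phi> b \<beta>" and v: "\<phi> v = ereal a" and "\<And>y. \<phi> y \<noteq> -\<infinity>"
  shows "ereal (b u) \<le> recession_at \<phi> v u"
proof (rule ereal_le_real)
  fix M assume "recession_at \<phi> v u \<le> ereal M"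
  then have ray: "\<phi> (v + t *\<^sub>R u) \<le> ereal (a + t * M)" if "0 < t" for t
    using that \<open>recession_at \<phi> v u \<le> ereal M\<close> recession_at_le_iff[of \<phi> v a, OF v assms(3)] by blast
  have "linear b" and minor: "\<And>y. ereal (b y - \<beta>) \<le> \<phi> y"
    using b unfolding affine_minorant_def dual_def by auto
  define C where "C = a - b v + \<beta>"
  have "0 \<le> C" using minor[of v] v unfolding C_def by simp
  have bound: "t * (b u - M) \<le> C" if "0 < t" for t
  proof -
    have "ereal (b (v + t *\<^sub>R u) - \<beta>) \<le> ereal (a + t * M)" using minor ray[OF that] by (rule order_trans)
    then show ?thesis using \<open>linear b\<close> unfolding C_def by (simp add: linear_add linear_scale algebra_simps)
  qed
  show "ereal (b u) \<le> ereal M"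
  proof (rule ccontr)
    assume "\<not> ?thesis"
    then have "0 < b u - M" by simp
    then have "(C + 1) / (b u - M) * (b u - M) \<le> C"
      using bound \<open>0 \<le> C\<close> by (intro bound) (simp add: add_nonneg_pos)
    then show False using \<open>0 < b u - M\<close> by simp
  qed
qed

section \<open>Weak-star separation\<close>

(* The pointwise vector space of functionals: weak-star separation is reduced to the algebraic
   separation theorem in this space. *)
instantiation "fun" :: (type, real_vector) real_vector
begin

definition scaleR_fun :: "real \<Rightarrow> ('a \<Rightarrow> 'b) \<Rightarrow> 'a \<Rightarrow> 'b" where
  "scaleR_fun c f = (\<lambda>x. c *\<^sub>R f x)"

instance
  by standard (auto simp: scaleR_fun_def fun_eq_iff scaleR_add_right scaleR_add_left)

end

lemma linear_eval: "linear (\<lambda>g::'a \<Rightarrow> real. g x)"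
  by (rule linearI) (simp_all add: scaleR_fun_def)

lemma linear_functional_bounded_on_box_is_eval:
  fixes \<Phi> :: "('a::real_vector \<Rightarrow> real) \<Rightarrow> real"
  assumes \<Phi>: "linear \<Phi>" and F: "finite F" "e > 0"
    and bound: "\<And>g. (\<forall>x\<in>F. \<bar>g x\<bar> < e) \<Longrightarrow> \<Phi> g \<le> 1"
  shows "\<exists>u. \<forall>k. linear k \<longrightarrow> \<Phi> k = k u"
proof -
  \<comment> \<open>\<Phi> is bounded on the whole line through such a g, hence only sees the values on F.\<close>
  have vanish: "\<Phi> g = 0" if "\<forall>x\<in>F. g x = 0" for g
  proof -
    have "c * \<Phi> g \<le> 1" for c
      using bound[of "c *\<^sub>R g"] that F(2) linear_scale[OF \<Phi>, of c g] by (simp add: scaleR_fun_def)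
    from this[of "2 / \<Phi> g"] this[of "- 2 / \<Phi> g"] show ?thesis by (cases "\<Phi> g = 0") auto
  qed
  define \<delta> where "\<delta> x = (\<lambda>y. if y = x then 1 else 0 :: real)" for x :: 'a
  define u where "u = (\<Sum>x\<in>F. \<Phi> (\<delta> x) *\<^sub>R x)"
  have "\<Phi> k = k u" if k: "linear k" for k
  proof -
    define s where "s = (\<Sum>x\<in>F. k x *\<^sub>R \<delta> x)"
    have s_eval: "s y = (\<Sum>x\<in>F. k x * \<delta> x y)" for y
      unfolding s_def using linear_sum[OF linear_eval[of y], of "\<lambda>x. k x *\<^sub>R \<delta> x" F]
      by (simp add: scaleR_fun_def)
    have "s y = k y" if "y \<in> F" for y
    proof -
      have "s y = (\<Sum>x\<in>F. if y = x then k x else 0)" unfolding s_eval \<delta>_def by (rule sum.cong) auto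
      then show ?thesis using F(1) that by simp
    qed
    then have "\<forall>y\<in>F. (k - s) y = 0" by simp
    then have "\<Phi> (k - s) = 0" by (rule vanish)
    then have "\<Phi> k = \<Phi> s" using linear_diff[OF \<Phi>, of k s] by simp
    also have "\<dots> = (\<Sum>x\<in>F. k x * \<Phi> (\<delta> x))" unfolding s_def by (simp add: linear_sum[OF \<Phi>] linear_scale[OF \<Phi>])
    also have "\<dots> = k u" unfolding u_def by (simp add: linear_sum[OF k] linear_scale[OF k] mult.commute)
    finally show ?thesis .
  qed
  then show ?thesis by blast
qed

lemma convex_absorbing_box:
  assumes F: "finite F" "0 < e"
  shows "convex {g :: 'a \<Rightarrow> real. \<forall>x\<in>F. \<bar>g x\<bar> < e}"
    and "absorbing {g :: 'a \<Rightarrow> real. \<forall>x\<in>F. \<bar>g x\<bar> < e}"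
proof -
  have "{g :: 'a \<Rightarrow> real. \<forall>x\<in>F. \<bar>g x\<bar> < e} = (\<Inter>x\<in>F. (\<lambda>g. g x) -` {-e<..<e})" by (auto simp: abs_less_iff)
  then show "convex {g :: 'a \<Rightarrow> real. \<forall>x\<in>F. \<bar>g x\<bar> < e}"
    by (simp add: convex_INT convex_linear_vimage linear_eval convex_real_interval)
  show "absorbing {g :: 'a \<Rightarrow> real. \<forall>x\<in>F. \<bar>g x\<bar> < e}"
    unfolding absorbing_def
  proof
    fix g :: "'a \<Rightarrow> real"
    define M where "M = (\<Sum>x\<in>F. \<bar>g x\<bar>)"
    have M: "\<bar>g x\<bar> \<le> M" if "x \<in> F" for x unfolding M_def using that F(1) by (intro member_le_sum) auto
    have "0 \<le> M" unfolding M_def by (intro sum_nonneg) auto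
    have "\<bar>(e / (M + 1)) * g x\<bar> < e" if "x \<in> F" for x
    proof -
      have "\<bar>(e / (M + 1)) * g x\<bar> = (e / (M + 1)) * \<bar>g x\<bar>" using F(2) \<open>0 \<le> M\<close> by (simp add: abs_mult)
      also have "\<dots> < (e / (M + 1)) * (M + 1)"
        using F(2) \<open>0 \<le> M\<close> M[OF that] by (intro mult_strict_left_mono) auto
      finally show ?thesis using \<open>0 \<le> M\<close> by simp
    qed
    then show "\<exists>c>0. c *\<^sub>R g \<in> {g. \<forall>x\<in>F. \<bar>g x\<bar> < e}" using F(2) \<open>0 \<le> M\<close>
      by (intro exI[of _ "e / (M + 1)"]) (simp add: scaleR_fun_def)
  qed
qed

lemma wclosure_separation:
  fixes K :: "('a::{real_vector,topological_space} \<Rightarrow> real) set"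
  assumes K: "convex K" "\<And>k. k \<in> K \<Longrightarrow> linear k" and w: "w \<in> dual" "w \<notin> wclosure K"
  shows "\<exists>u \<delta>. 0 < \<delta> \<and> (\<forall>k\<in>K. k u + \<delta> \<le> w u)"
proof (cases "K = {}")
  case True
  then show ?thesis by (intro exI[of _ 0] exI[of _ 1]) auto
next
  case False
  then obtain k0 where "k0 \<in> K" by blast
  obtain F e where F: "finite F" "e > 0" and far: "\<And>k. k \<in> K \<Longrightarrow> \<exists>x\<in>F. e \<le> \<bar>k x - w x\<bar>"
    using w unfolding wclosure_def by (auto simp: not_less)
  define U where "U = {g. \<forall>x\<in>F. \<bar>g x\<bar> < e}"
  have "w \<noteq> k + g" if "k \<in> K" "g \<in> U" for k g
    using far[OF that(1)] that(2) unfolding U_def by (auto simp: abs_minus_commute)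
  moreover have "0 \<in> U" unfolding U_def using F(2) by simp
  ultimately obtain \<Phi> :: "('a \<Rightarrow> real) \<Rightarrow> real" and \<delta> where
    \<Phi>: "linear \<Phi>" "\<forall>g\<in>U. \<Phi> g \<le> 1" "\<delta> > 0" "\<forall>k\<in>K. \<Phi> k + \<delta> \<le> \<Phi> w"
    using separating_linear_functional[OF K(1) \<open>k0 \<in> K\<close> convex_absorbing_box(1)[OF F, folded U_def]
        _ convex_absorbing_box(2)[OF F, folded U_def]]
    by blast
  obtain u where "\<And>k. linear k \<Longrightarrow> \<Phi> k = k u"
    using linear_functional_bounded_on_box_is_eval[OF \<Phi>(1) F] \<Phi>(2) unfolding U_def by blast
  then have "\<forall>k\<in>K. k u + \<delta> \<le> w u" using \<Phi>(4) K(2) w(1) unfolding dual_def by fastforce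
  then show ?thesis using \<Phi>(3) by blast
qed

lemma wclosure_approx:
  assumes "w \<in> wclosure K" "0 < e"
  shows "\<exists>k\<in>K. \<bar>k u - w u\<bar> < e"
proof -
  have "\<forall>F e. finite F \<and> 0 < e \<longrightarrow> (\<exists>k\<in>K. \<forall>x\<in>F. \<bar>k x - w x\<bar> < e)"
    using assms(1) unfolding wclosure_def by blast
  then show ?thesis using assms(2) by (auto dest: spec[of _ "{u}"])
qed

lemma wclosure_vanishing:
  assumes "w \<in> wclosure K" "\<And>k. k \<in> K \<Longrightarrow> k u = 0"
  shows "w u = 0"
proof (rule ccontr)
  assume "w u \<noteq> 0"
  then have "0 < \<bar>w u\<bar>" by simp
  then obtain k where "k \<in> K" "\<bar>k u - w u\<bar> < \<bar>w u\<bar>" using wclosure_approx[OF assms(1)] by blast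
  then show False using assms(2)[OF \<open>k \<in> K\<close>] by simp
qed

section \<open>Conjugates and the recession function\<close>

lemma conj_le_iff:
  assumes "\<And>y. \<phi> y \<noteq> -\<infinity>"
  shows "conj \<phi> b \<le> ereal \<beta> \<longleftrightarrow> (\<forall>y. ereal (b y - \<beta>) \<le> \<phi> y)"
proof -
  have "ereal (b y) - \<phi> y \<le> ereal \<beta> \<longleftrightarrow> ereal (b y - \<beta>) \<le> \<phi> y" for y
    using assms[of y] by (cases "\<phi> y") auto
  then show ?thesis unfolding conj_def SUP_le_iff by blast
qed

lemma conj_dom_iff:
  assumes G: "\<phi> \<in> Gamma"
  shows "b \<in> conj_dom \<phi> \<longleftrightarrow> (\<exists>\<beta>. affine_minorant \<phi> b \<beta>)"
proof
  assume b: "b \<in> conj_dom \<phi>"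
  obtain x0 a0 where "\<phi> x0 = ereal a0" using Gamma_finite_point[OF G] by blast
  moreover have "ereal (b x0) - \<phi> x0 \<le> conj \<phi> b" unfolding conj_def by (rule SUP_upper) simp
  ultimately have "conj \<phi> b \<noteq> -\<infinity>" by auto
  moreover have "conj \<phi> b \<noteq> \<infinity>" using b unfolding conj_dom_def by simp
  ultimately obtain \<beta> where "conj \<phi> b = ereal \<beta>" by (cases "conj \<phi> b") auto
  then have "conj \<phi> b \<le> ereal \<beta>" by simp
  then have "\<forall>y. ereal (b y - \<beta>) \<le> \<phi> y" using conj_le_iff[of \<phi>, OF Gamma_not_MInfty[OF G]] by blast
  then show "\<exists>\<beta>. affine_minorant \<phi> b \<beta>" using b unfolding affine_minorant_def conj_dom_def by blast
next
  assume "\<exists>\<beta>. affine_minorant \<phi> b \<beta>"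
  then obtain \<beta> where "b \<in> dual" "conj \<phi> b \<le> ereal \<beta>"
    using conj_le_iff[of \<phi>, OF Gamma_not_MInfty[OF G]] unfolding affine_minorant_def by blast
  moreover have "ereal \<beta> < \<infinity>" by simp
  ultimately show "b \<in> conj_dom \<phi>" unfolding conj_dom_def by (blast intro: le_less_trans)
qed

lemma convex_conj_dom:
  assumes G: "\<phi> \<in> Gamma"
  shows "convex (conj_dom \<phi>)"
proof (rule convexI)
  fix b1 b2 and a c :: real
  assume "b1 \<in> conj_dom \<phi>" "b2 \<in> conj_dom \<phi>" and ac: "0 \<le> a" "0 \<le> c" "a + c = 1"
  then obtain \<beta>1 \<beta>2 where b1: "affine_minorant \<phi> b1 \<beta>1" and b2: "affine_minorant \<phi> b2 \<beta>2"
    using conj_dom_iff[OF G] by blast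
  have "ereal ((a *\<^sub>R b1 + c *\<^sub>R b2) y - (a * \<beta>1 + c * \<beta>2)) \<le> \<phi> y" for y
  proof (cases "\<phi> y")
    case (real r)
    have "ereal (b1 y - \<beta>1) \<le> \<phi> y" "ereal (b2 y - \<beta>2) \<le> \<phi> y"
      using b1 b2 unfolding affine_minorant_def by blast+
    then have "b1 y - \<beta>1 \<le> r" "b2 y - \<beta>2 \<le> r" using real by simp_all
    then have "a * (b1 y - \<beta>1) + c * (b2 y - \<beta>2) \<le> a * r + c * r"
      using ac by (intro add_mono mult_left_mono) auto
    then show ?thesis using real ac(3) by (simp add: scaleR_fun_def algebra_simps flip: distrib_right)
  qed (use Gamma_not_MInfty[OF G] in auto)
  moreover have "a *\<^sub>R b1 + c *\<^sub>R b2 \<in> dual"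
    using b1 b2 unfolding affine_minorant_def scaleR_fun_def plus_fun_def real_scaleR_def
    by (intro dual_add dual_scale) auto
  ultimately show "a *\<^sub>R b1 + c *\<^sub>R b2 \<in> conj_dom \<phi>"
    unfolding conj_dom_iff[OF G] affine_minorant_def by blast
qed

context
  fixes \<phi> :: "'a::{real_vector,t2_space} \<Rightarrow> ereal"
  assumes L: "lcs TYPE('a)" and G: "\<phi> \<in> Gamma"
begin

lemma recession_zero: "recession \<phi> 0 = 0"
proof -
  obtain x0 a0 where x0: "\<phi> x0 = ereal a0" using Gamma_finite_point[OF G] by blast
  show ?thesis unfolding recession_eq_recession_at[OF L G x0] by (rule recession_at_zero[of \<phi>, OF x0])
qed

lemma conj_dom_le_recession:
  assumes "b \<in> conj_dom \<phi>"
  shows "ereal (b u) \<le> recession \<phi> u"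
proof -
  obtain \<beta> where \<beta>: "affine_minorant \<phi> b \<beta>" using assms conj_dom_iff[OF G] by blast
  obtain x0 a0 where x0: "\<phi> x0 = ereal a0" using Gamma_finite_point[OF G] by blast
  show ?thesis unfolding recession_eq_recession_at[OF L G x0]
    by (rule affine_minorant_le_recession_at[of \<phi>, OF \<beta> x0 Gamma_not_MInfty[OF G]])
qed

lemma recession_le_if_conj_dom_bounded:
  assumes bounded: "\<And>b. b \<in> conj_dom \<phi> \<Longrightarrow> b u \<le> M"
  shows "recession \<phi> u \<le> ereal M"
proof -
  obtain x0 a0 where x0: "\<phi> x0 = ereal a0" using Gamma_finite_point[OF G] by blast
  have "\<phi> (x0 + t *\<^sub>R u) \<le> ereal (a0 + t * M)" if "0 < t" for t
  proof (rule ccontr)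
    assume "\<not> ?thesis"
    then obtain b \<beta> where b: "affine_minorant \<phi> b \<beta>" and above: "a0 + t * M < b (x0 + t *\<^sub>R u) - \<beta>"
      using Gamma_affine_minorant_above[OF L G] by (meson not_le)
    then have "b u \<le> M" using bounded conj_dom_iff[OF G] by blast
    moreover have "b x0 - \<beta> \<le> a0" and "linear b"
      using b x0 unfolding affine_minorant_def dual_def by (auto dest: spec[of _ x0])
    moreover have "t * b u \<le> t * M" using \<open>b u \<le> M\<close> \<open>0 < t\<close> by simp
    ultimately show False using above by (simp add: linear_add linear_scale)
  qed
  then show ?thesis
    unfolding recession_eq_recession_at[OF L G x0] recession_at_le_iff[of \<phi> x0 a0, OF x0 Gamma_not_MInfty[OF G]] by blast
qed

lemma subdiff_recession_zero: "subdiff (recession \<phi>) 0 = {b \<in> dual. \<forall>u. ereal (b u) \<le> recession \<phi> u}"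
  unfolding subdiff_def recession_zero by simp

lemma subdiff_recession_zeroD:
  assumes "c \<in> subdiff (recession \<phi>) 0"
  shows "linear c" "ereal (c u) \<le> recession \<phi> u"
  using assms unfolding subdiff_recession_zero dual_def by blast+

lemma subdiff_recession_eq_wclosure: "subdiff (recession \<phi>) 0 = wclosure (conj_dom \<phi>)"
proof (intro equalityI subsetI)
  fix b assume "b \<in> subdiff (recession \<phi>) 0"
  then have b: "b \<in> dual" "\<And>u. ereal (b u) \<le> recession \<phi> u" unfolding subdiff_recession_zero by auto
  show "b \<in> wclosure (conj_dom \<phi>)"
  proof (rule ccontr)
    assume "b \<notin> wclosure (conj_dom \<phi>)"
    moreover have "linear c" if "c \<in> conj_dom \<phi>" for c using that unfolding conj_dom_def dual_def by blast
    ultimately obtain u \<delta> where "0 < \<delta>" "\<And>c. c \<in> conj_dom \<phi> \<Longrightarrow> c u + \<delta> \<le> b u"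
      using wclosure_separation[OF convex_conj_dom[OF G] _ b(1)] by blast
    then have "recession \<phi> u \<le> ereal (b u - \<delta>)"
      by (intro recession_le_if_conj_dom_bounded) (simp add: algebra_simps)
    with b(2)[of u] have "ereal (b u) \<le> ereal (b u - \<delta>)" by (rule order_trans)
    with \<open>0 < \<delta>\<close> show False by simp
  qed
next
  fix b assume b: "b \<in> wclosure (conj_dom \<phi>)"
  have "ereal (b u) \<le> recession \<phi> u" for u
  proof (rule ereal_le_epsilon2)
    fix e :: real assume "0 < e"
    then obtain c where "c \<in> conj_dom \<phi>" "\<bar>c u - b u\<bar> < e" using wclosure_approx[OF b] by blast
    then have "ereal (b u) \<le> ereal (c u) + ereal e" by simp
    also have "\<dots> \<le> recession \<phi> u + ereal e" by (intro add_right_mono conj_dom_le_recession) fact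
    finally show "ereal (b u) \<le> recession \<phi> u + ereal e" .
  qed
  then show "b \<in> subdiff (recession \<phi>) 0"
    using b unfolding subdiff_recession_zero wclosure_def by simp
qed

end

definition annihilator :: "'a set \<Rightarrow> ('a::{real_vector,topological_space} \<Rightarrow> real) set" where
  "annihilator N = {w \<in> dual. \<forall>u\<in>N. w u = 0}"

lemma lin_subspace_annihilator: "lin_subspace (annihilator N)"
  unfolding lin_subspace_def annihilator_def by (auto intro!: dual_add dual_scale dual_zero)

lemma convex_dual_minorants: "convex {c \<in> dual. \<forall>u. ereal (c u) \<le> g u}"
proof (rule convexI)
  fix c1 c2 and a b :: real
  assume c: "c1 \<in> {c \<in> dual. \<forall>u. ereal (c u) \<le> g u}" "c2 \<in> {c \<in> dual. \<forall>u. ereal (c u) \<le> g u}"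
    and ab: "0 \<le> a" "0 \<le> b" "a + b = 1"
  have "ereal (a * c1 u + b * c2 u) \<le> g u" for u
  proof (cases "g u")
    case (real r)
    then have "c1 u \<le> r" "c2 u \<le> r" using c by (metis (mono_tags) ereal_less_eq(3) mem_Collect_eq)+
    then have "a * c1 u + b * c2 u \<le> a * r + b * r" using ab by (intro add_mono mult_left_mono) auto
    then show ?thesis using real ab(3) by (simp flip: distrib_right)
  next
    case MInf
    have "ereal (c1 u) \<le> g u" using c(1) by blast
    then show ?thesis using MInf by simp
  qed simp
  moreover have "(\<lambda>u. a * c1 u + b * c2 u) \<in> dual" using c by (intro dual_add dual_scale) auto
  ultimately show "a *\<^sub>R c1 + b *\<^sub>R c2 \<in> {c \<in> dual. \<forall>u. ereal (c u) \<le> g u}"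
    by (simp add: scaleR_fun_def plus_fun_def)
qed

definition direction_cone :: "('a \<Rightarrow> real) set \<Rightarrow> ('a \<Rightarrow> real) \<Rightarrow> ('a \<Rightarrow> real) set" where
  "direction_cone B b = {(\<lambda>x. t * (c x - b x)) | t c. t \<ge> 0 \<and> c \<in> B}"

lemma qri_iff: "b \<in> qri B \<longleftrightarrow> b \<in> B \<and> lin_subspace (wclosure (direction_cone B b))"
  unfolding qri_def direction_cone_def by simp

lemma direction_cone_memI: "0 \<le> t \<Longrightarrow> c \<in> B \<Longrightarrow> (\<lambda>x. t * (c x - b x)) \<in> direction_cone B b"
  unfolding direction_cone_def by blast

lemma convex_direction_cone:
  fixes B :: "('a \<Rightarrow> real) set"
  assumes B: "convex B" "b \<in> B"
  shows "convex (direction_cone B b)"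
  unfolding direction_cone_def
proof (rule convexI)
  fix p q and a d :: real
  assume "p \<in> {(\<lambda>x. t * (c x - b x)) | t c. t \<ge> 0 \<and> c \<in> B}"
    and "q \<in> {(\<lambda>x. t * (c x - b x)) | t c. t \<ge> 0 \<and> c \<in> B}"
    and ad: "0 \<le> a" "0 \<le> d" "a + d = 1"
  then obtain t1 c1 t2 c2 where p: "p = (\<lambda>x. t1 * (c1 x - b x))" "t1 \<ge> 0" "c1 \<in> B"
    and q: "q = (\<lambda>x. t2 * (c2 x - b x))" "t2 \<ge> 0" "c2 \<in> B" by blast
  define T where "T = a * t1 + d * t2"
  have "0 \<le> a * t1" "0 \<le> d * t2" using ad p q by auto
  have pq: "a *\<^sub>R p + d *\<^sub>R q = (\<lambda>x. (a * t1) * (c1 x - b x) + (d * t2) * (c2 x - b x))"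
    unfolding p q by (simp add: fun_eq_iff scaleR_fun_def algebra_simps)
  show "a *\<^sub>R p + d *\<^sub>R q \<in> {(\<lambda>x. t * (c x - b x)) | t c. t \<ge> 0 \<and> c \<in> B}"
  proof (cases "T = 0")
    case True
    then have "a * t1 = 0" "d * t2 = 0" using \<open>0 \<le> a * t1\<close> \<open>0 \<le> d * t2\<close> unfolding T_def by linarith+
    then have "a *\<^sub>R p + d *\<^sub>R q = (\<lambda>x. 0 * (b x - b x))" unfolding pq by (simp only:) simp
    then show ?thesis using B(2) by blast
  next
    case False
    then have "T > 0" using \<open>0 \<le> a * t1\<close> \<open>0 \<le> d * t2\<close> unfolding T_def by linarith
    define c where "c = (a * t1 / T) *\<^sub>R c1 + (d * t2 / T) *\<^sub>R c2"
    have "c \<in> B" unfolding c_def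
      using \<open>0 \<le> a * t1\<close> \<open>0 \<le> d * t2\<close> \<open>T > 0\<close> p(3) q(3)
      by (intro convexD[OF B(1)]) (auto simp: T_def add_divide_distrib[symmetric])
    have "T * c x = a * t1 * c1 x + d * t2 * c2 x" for x
      using \<open>T > 0\<close> unfolding c_def by (simp add: scaleR_fun_def distrib_left)
    then have "a *\<^sub>R p + d *\<^sub>R q = (\<lambda>x. T * (c x - b x))"
      unfolding pq by (simp add: fun_eq_iff right_diff_distrib T_def algebra_simps)
    then show ?thesis using \<open>c \<in> B\<close> \<open>T > 0\<close> by force
  qed
qed

context
  fixes \<phi> :: "'a::{real_vector,t2_space} \<Rightarrow> ereal" and xs :: "'a \<Rightarrow> real"
  assumes L: "lcs TYPE('a)" and G: "\<phi> \<in> Gamma" and xs: "xs \<in> subdiff (recession \<phi>) 0"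
    and symmetric: "\<And>u. recession \<phi> u \<le> ereal (xs u) \<Longrightarrow> recession \<phi> (- u) \<le> ereal (xs (- u))"
begin

private lemma linear_direction_cone: "k \<in> direction_cone (subdiff (recession \<phi>) 0) xs \<Longrightarrow> linear k"
  using subdiff_recession_zeroD(1)[OF L G xs]
  unfolding direction_cone_def by (auto dest!: subdiff_recession_zeroD(1)[OF L G] simp: linear_iff algebra_simps)

private lemma subdiff_recession_agrees:
  assumes c: "c \<in> subdiff (recession \<phi>) 0" and u: "recession \<phi> u \<le> ereal (xs u)"
  shows "c u = xs u"
proof -
  have "ereal (c u) \<le> ereal (xs u)" using subdiff_recession_zeroD(2)[OF L G c] u by (rule order_trans)
  moreover have "ereal (c (- u)) \<le> ereal (xs (- u))"
    using subdiff_recession_zeroD(2)[OF L G c] symmetric[OF u] by (rule order_trans)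
  ultimately show ?thesis using subdiff_recession_zeroD(1)[OF L G c] subdiff_recession_zeroD(1)[OF L G xs]
    by (simp add: linear_neg)
qed

lemma wclosure_direction_cone_subdiff_recession:
  "wclosure (direction_cone (subdiff (recession \<phi>) 0) xs) = annihilator {u. recession \<phi> u \<le> ereal (xs u)}"
proof (intro equalityI subsetI)
  fix w assume w: "w \<in> wclosure (direction_cone (subdiff (recession \<phi>) 0) xs)"
  have "w u = 0" if "recession \<phi> u \<le> ereal (xs u)" for u
    using w by (rule wclosure_vanishing) (auto simp: direction_cone_def subdiff_recession_agrees[OF _ that])
  then show "w \<in> annihilator {u. recession \<phi> u \<le> ereal (xs u)}"
    using w unfolding annihilator_def wclosure_def by blast
next
  fix w assume w: "w \<in> annihilator {u. recession \<phi> u \<le> ereal (xs u)}"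
  show "w \<in> wclosure (direction_cone (subdiff (recession \<phi>) 0) xs)"
  proof (rule ccontr)
    assume "w \<notin> wclosure (direction_cone (subdiff (recession \<phi>) 0) xs)"
    moreover have "convex (direction_cone (subdiff (recession \<phi>) 0) xs)"
      using convex_direction_cone[OF _ xs] convex_dual_minorants unfolding subdiff_recession_zero[OF L G] by blast
    moreover have "w \<in> dual" using w unfolding annihilator_def by blast
    ultimately obtain u \<delta> where "0 < \<delta>"
      and sep: "\<And>k. k \<in> direction_cone (subdiff (recession \<phi>) 0) xs \<Longrightarrow> k u + \<delta> \<le> w u"
      using wclosure_separation[OF _ linear_direction_cone] by metis
    have "(\<lambda>x. 0 * (xs x - xs x)) \<in> direction_cone (subdiff (recession \<phi>) 0) xs"
      using xs by (rule direction_cone_memI[rotated]) simp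
    from sep[OF this] have "\<delta> \<le> w u" by simp
    \<comment> \<open>Rescaling an element of the cone that is positive at u would violate the separation.\<close>
    have le_xs: "c u \<le> xs u" if "c \<in> subdiff (recession \<phi>) 0" for c
    proof (rule ccontr)
      assume "\<not> c u \<le> xs u"
      define t where "t = w u / (c u - xs u)"
      have "0 \<le> t" unfolding t_def using \<open>\<not> c u \<le> xs u\<close> \<open>0 < \<delta>\<close> \<open>\<delta> \<le> w u\<close> by simp
      then have "(\<lambda>x. t * (c x - xs x)) \<in> direction_cone (subdiff (recession \<phi>) 0) xs"
        using that by (rule direction_cone_memI)
      from sep[OF this] show False using \<open>\<not> c u \<le> xs u\<close> \<open>0 < \<delta>\<close> unfolding t_def by simp
    qed
    have "b \<in> subdiff (recession \<phi>) 0" if "b \<in> conj_dom \<phi>" for b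
      using that conj_dom_le_recession[OF L G that] unfolding subdiff_recession_zero[OF L G] conj_dom_def by blast
    then have "recession \<phi> u \<le> ereal (xs u)"
      using le_xs by (intro recession_le_if_conj_dom_bounded[OF L G]) blast
    then have "w u = 0" using w unfolding annihilator_def by blast
    then show False using \<open>0 < \<delta>\<close> \<open>\<delta> \<le> w u\<close> by simp
  qed
qed

lemma qri_subdiff_recession: "xs \<in> qri (subdiff (recession \<phi>) 0)"
  unfolding qri_iff using xs wclosure_direction_cone_subdiff_recession lin_subspace_annihilator by simp

end

section \<open>Composition with a linear operator\<close>

lemma recession_at_linear_comp:
  assumes A: "linear A" and xs: "linear xs" and v: "h (A v) = ereal a"
  shows "recession_at (\<lambda>x. h (A x) + ereal (xs x)) v u = recession_at h (A v) (A u) + ereal (xs u)"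
proof -
  have quotient_eq: "(h (A (v + t *\<^sub>R u)) + ereal (xs (v + t *\<^sub>R u)) - (h (A v) + ereal (xs v))) / ereal t
      = (h (A v + t *\<^sub>R A u) - h (A v)) / ereal t + ereal (xs u)" if "t \<in> {0<..}" for t
  proof -
    have t: "0 < t" using that by simp
    have "A (v + t *\<^sub>R u) = A v + t *\<^sub>R A u" "xs (v + t *\<^sub>R u) = xs v + t * xs u"
      using A xs by (simp_all add: linear_add linear_scale)
    then show ?thesis using v t by (cases "h (A v + t *\<^sub>R A u)") (simp_all add: field_simps)
  qed
  have "recession_at (\<lambda>x. h (A x) + ereal (xs x)) v u
      = (SUP t\<in>{0<..}. (h (A v + t *\<^sub>R A u) - h (A v)) / ereal t + ereal (xs u))"
    unfolding recession_at_def by (rule SUP_cong[OF refl quotient_eq])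
  also have "\<dots> = recession_at h (A v) (A u) + ereal (xs u)"
    unfolding recession_at_def by (rule SUP_ereal_add_left) auto
  finally show ?thesis .
qed

lemma ereal_le_add_self_iff: "ereal c \<le> x + ereal c \<longleftrightarrow> 0 \<le> x"
  by (cases x) auto

lemma ereal_add_le_self_iff: "x + ereal c \<le> ereal c \<longleftrightarrow> x \<le> 0"
  by (cases x) auto

locale linear_composition =
  fixes A :: "'a::{real_vector,t2_space} \<Rightarrow> 'b::{real_vector,t2_space}"
    and h :: "'b \<Rightarrow> ereal" and xs :: "'a \<Rightarrow> real" and f :: "'a \<Rightarrow> ereal"
  assumes lcs_X: "lcs TYPE('a)" and lcs_Y: "lcs TYPE('b)" and A: "linear A"
    and h: "h \<in> Gamma" and xs: "xs \<in> dual"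
    and f_def: "f = (\<lambda>x. h (A x) + ereal (xs x))" and f: "f \<in> Gamma"
begin

lemma linear_xs: "linear xs"
  using xs unfolding dual_def by blast

lemma recession_comp: "recession f u = recession h (A u) + ereal (xs u)"
proof -
  obtain x0 a0 where x0: "f x0 = ereal a0" using Gamma_finite_point[OF f] by blast
  then obtain b where hx0: "h (A x0) = ereal b"
    unfolding f_def using Gamma_not_MInfty[OF h, of "A x0"] by (cases "h (A x0)") auto
  have "recession f u = recession_at f x0 u" by (simp add: recession_eq_recession_at[OF lcs_X f x0])
  also have "\<dots> = recession_at h (A x0) (A u) + ereal (xs u)"
    unfolding f_def by (rule recession_at_linear_comp[of A xs h x0 b, OF A linear_xs hx0])
  also have "recession_at h (A x0) (A u) = recession h (A u)"
    by (simp add: recession_eq_recession_at[OF lcs_Y h hx0])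
  finally show ?thesis .
qed

lemma recession_comp_kernel: "A u = 0 \<Longrightarrow> recession f u = ereal (xs u)"
  using recession_comp recession_zero[OF lcs_Y h] by simp

lemma xs_in_subdiff_recession_iff: "xs \<in> subdiff (recession f) 0 \<longleftrightarrow> (\<forall>u. 0 \<le> recession h (A u))"
  unfolding subdiff_recession_zero[OF lcs_X f] recession_comp using xs by (simp add: ereal_le_add_self_iff)

lemma kernel_eq_recession_sublevel:
  assumes "{y. recession h y \<le> 0} = {0}"
  shows "{x. A x = 0} = {u. recession f u \<le> ereal (xs u)}"
  using assms unfolding recession_comp ereal_add_le_self_iff by blast

lemma recession_nonneg_if_sublevel_trivial:
  assumes "{y. recession h y \<le> 0} = {0}"
  shows "0 \<le> recession h y"
proof (cases "recession h y \<le> 0")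
  case True
  then have "y = 0" using assms by blast
  then show ?thesis using recession_zero[OF lcs_Y h] by simp
qed simp

lemma xs_in_qri_if_sublevel_trivial:
  assumes "{y. recession h y \<le> 0} = {0}"
  shows "xs \<in> qri (wclosure (conj_dom f))"
proof -
  have "xs \<in> subdiff (recession f) 0"
    using recession_nonneg_if_sublevel_trivial[OF assms] xs_in_subdiff_recession_iff by blast
  moreover have "recession f (- u) \<le> ereal (xs (- u))" if "recession f u \<le> ereal (xs u)" for u
  proof -
    have "A u = 0" using that kernel_eq_recession_sublevel[OF assms] by blast
    then show ?thesis using recession_comp_kernel A by (simp add: linear_neg)
  qed
  ultimately show ?thesis
    using qri_subdiff_recession[OF lcs_X f] subdiff_recession_eq_wclosure[OF lcs_X f] by metis
qed

lemma sublevel_trivial_if_kernel_eq: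
  assumes "surj A" and "{x. A x = 0} = {u. recession f u \<le> ereal (xs u)}"
  shows "{y. recession h y \<le> 0} = {0}"
proof -
  have "y = 0" if "recession h y \<le> 0" for y
  proof -
    obtain u where "y = A u" using \<open>surj A\<close> by (metis surjD)
    then show ?thesis using that assms(2) unfolding recession_comp ereal_add_le_self_iff by blast
  qed
  then show ?thesis using recession_zero[OF lcs_Y h] by auto
qed

lemma bounded_below_consequences:
  assumes "\<forall>y. ereal c \<le> h y"
  shows "(\<forall>y. 0 \<le> recession h y) \<and> xs \<in> conj_dom f"
proof
  have "affine_minorant h (\<lambda>_. 0) (- c)" using assms dual_zero unfolding affine_minorant_def by simp
  then show "\<forall>y. 0 \<le> recession h y"
    using conj_dom_le_recession[OF lcs_Y h] conj_dom_iff[OF h] zero_ereal_def by metis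
  have "ereal (xs y - - c) \<le> h (A y) + ereal (xs y)" for y
    using assms[rule_format, of "A y"] by (cases "h (A y)") auto
  then have "affine_minorant f xs (- c)" using xs unfolding affine_minorant_def f_def by blast
  then show "xs \<in> conj_dom f" using conj_dom_iff[OF f] by blast
qed

lemma conj_xs_eq:
  assumes "surj A"
  shows "conj f xs = - (INF y. h y)"
proof -
  have "conj f xs = (SUP x. - h (A x))" unfolding conj_def f_def
  proof (rule SUP_cong)
    fix x show "ereal (xs x) - (h (A x) + ereal (xs x)) = - h (A x)"
      using Gamma_not_MInfty[OF h, of "A x"] by (cases "h (A x)") auto
  qed simp
  also have "\<dots> = - (INF x. h (A x))" by (rule ereal_SUP_uminus_eq)
  also have "(INF x. h (A x)) = Inf (h ` range A)" by (simp add: image_image)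
  also have "\<dots> = (INF y. h y)" using assms by simp
  finally show ?thesis .
qed

lemma bounded_below_iff:
  assumes "surj A"
  shows "(\<exists>c. \<forall>y. ereal c \<le> h y) \<longleftrightarrow> xs \<in> conj_dom f"
proof
  assume "xs \<in> conj_dom f"
  then have "- (INF y. h y) \<noteq> \<infinity>" using assms by (simp add: conj_dom_def conj_xs_eq)
  then have not_MInfty: "(INF y. h y) \<noteq> -\<infinity>" by auto
  obtain y1 a1 where "h y1 = ereal a1" using Gamma_finite_point[OF h] by blast
  moreover have "(INF y. h y) \<le> h y1" by (rule INF_lower) simp
  ultimately have "(INF y. h y) \<noteq> \<infinity>" by auto
  with not_MInfty obtain c where "(INF y. h y) = ereal c" by (cases "INF y. h y") auto
  then show "\<exists>c. \<forall>y. ereal c \<le> h y" by (metis INF_lower UNIV_I)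
qed (use bounded_below_consequences in blast)

lemma xs_in_subdiff_iff: "xs \<in> subdiff f x \<longleftrightarrow> h (A x) \<noteq> \<infinity> \<and> (\<forall>v. h (A x) \<le> h (A v))"
proof -
  have "ereal (xs (v - x)) \<le> f v - f x \<longleftrightarrow> h (A x) \<le> h (A v)" if "h (A x) = ereal a" for v a
    using that Gamma_not_MInfty[OF h, of "A v"] linear_diff[OF linear_xs]
    unfolding f_def by (cases "h (A v)") auto
  moreover have "f x \<noteq> -\<infinity>" "f x \<noteq> \<infinity> \<longleftrightarrow> h (A x) \<noteq> \<infinity>"
    unfolding f_def using Gamma_not_MInfty[OF h, of "A x"] by (cases "h (A x)"; simp)+
  ultimately show ?thesis
    unfolding subdiff_def using xs Gamma_not_MInfty[OF h, of "A x"] by (cases "h (A x)") auto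
qed

lemma attains_inf_iff:
  assumes "surj A"
  shows "(\<exists>y. h y = (INF z. h z)) \<longleftrightarrow> xs \<in> Im_subdiff f"
proof -
  have "(\<exists>y. h y = (INF z. h z)) \<longleftrightarrow> (\<exists>y. h y \<noteq> \<infinity> \<and> (\<forall>z. h y \<le> h z))"
  proof
    assume "\<exists>y. h y = (INF z. h z)"
    then obtain y where y: "h y = (INF z. h z)" by blast
    then have min: "h y \<le> h z" for z by (simp add: INF_lower)
    obtain y1 a1 where "h y1 = ereal a1" using Gamma_finite_point[OF h] by blast
    then have "h y \<noteq> \<infinity>" using min[of y1] by auto
    then show "\<exists>y. h y \<noteq> \<infinity> \<and> (\<forall>z. h y \<le> h z)" using min by blast
  next
    assume "\<exists>y. h y \<noteq> \<infinity> \<and> (\<forall>z. h y \<le> h z)"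
    then obtain y where "\<forall>z. h y \<le> h z" by blast
    then have "h y = (INF z. h z)" by (intro antisym INF_greatest) (auto intro: INF_lower)
    then show "\<exists>y. h y = (INF z. h z)" by blast
  qed
  also have "\<dots> \<longleftrightarrow> (\<exists>x. h (A x) \<noteq> \<infinity> \<and> (\<forall>v. h (A x) \<le> h (A v)))"
  proof -
    have "(\<forall>z. h y \<le> h z) \<longleftrightarrow> (\<forall>v. h y \<le> h (A v))" for y
      using surjD[OF assms] by metis
    moreover have "(\<exists>y. P y) \<longleftrightarrow> (\<exists>x. P (A x))" for P
      using surjD[OF assms] by metis
    ultimately show ?thesis by simp
  qed
  also have "\<dots> \<longleftrightarrow> (\<exists>x. xs \<in> subdiff f x)" by (simp only: xs_in_subdiff_iff)
  also have "\<dots> \<longleftrightarrow> xs \<in> Im_subdiff f" unfolding Im_subdiff_def by simp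
  finally show ?thesis .
qed

end

theorem proposition12:
  fixes A :: "'a::{real_vector,t2_space} \<Rightarrow> 'b::{real_vector,t2_space}"
    and h :: "'b \<Rightarrow> ereal" and xs :: "'a \<Rightarrow> real" and f :: "'a \<Rightarrow> ereal"
  assumes X: "lcs TYPE('a)" "nontrivial TYPE('a)"
    and Y: "lcs TYPE('b)" "nontrivial TYPE('b)"
    and A: "linear A" "continuous_on UNIV A"
    and h: "h \<in> Gamma"
    and xs: "xs \<in> dual"
    and f_def: "f = (\<lambda>x. h (A x) + ereal (xs x))"
    and f: "f \<in> Gamma"
  shows
    \<comment> \<open>(a)\<close>
    "(recession f = (\<lambda>x. recession h (A x) + ereal (xs x)) \<and>
      {x. A x = 0} \<subseteq> {u. recession f u = ereal (xs u)})
   \<and> \<comment> \<open>(b)\<close>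
     (subdiff (recession f) 0 = wclosure (conj_dom f) \<and>
      ((\<forall>y. recession h y \<ge> 0) \<longrightarrow> xs \<in> subdiff (recession f) 0) \<and>
      (range A = UNIV \<and> xs \<in> subdiff (recession f) 0 \<longrightarrow> (\<forall>y. recession h y \<ge> 0)))
   \<and> \<comment> \<open>(c)\<close>
     (({y. recession h y \<le> 0} = {0} \<longrightarrow>
         {x. A x = 0} = {u. recession f u \<le> ereal (xs u)} \<and>
         xs \<in> qri (wclosure (conj_dom f))) \<and>
      (range A = UNIV \<and> {x. A x = 0} = {u. recession f u \<le> ereal (xs u)} \<longrightarrow>
         {y. recession h y \<le> 0} = {0}))
   \<and> \<comment> \<open>(d)\<close>
     (((\<exists>c::real. \<forall>y. ereal c \<le> h y) \<longrightarrow>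
         (\<forall>y. recession h y \<ge> 0) \<and> xs \<in> conj_dom f) \<and>
      (range A = UNIV \<longrightarrow>
         (INF y. h y) = - conj f xs \<and>
         ((\<exists>c::real. \<forall>y. ereal c \<le> h y) \<longleftrightarrow> xs \<in> conj_dom f)))
   \<and> \<comment> \<open>(e)\<close>
     (range A = UNIV \<longrightarrow> ((\<exists>y. h y = (INF z. h z)) \<longleftrightarrow> xs \<in> Im_subdiff f))"
proof -
  interpret linear_composition A h xs f
    by (rule linear_composition.intro[OF X(1) Y(1) A(1) h xs f_def f])
  have "recession f = (\<lambda>x. recession h (A x) + ereal (xs x))"
    using recession_comp by (simp add: fun_eq_iff)
  moreover have "{x. A x = 0} \<subseteq> {u. recession f u = ereal (xs u)}"
    using recession_comp_kernel by blast
  moreover have "subdiff (recession f) 0 = wclosure (conj_dom f)"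
    by (rule subdiff_recession_eq_wclosure[OF X(1) f])
  moreover have "(\<forall>y. recession h y \<ge> 0) \<longrightarrow> xs \<in> subdiff (recession f) 0"
    using xs_in_subdiff_recession_iff by blast
  moreover have "range A = UNIV \<and> xs \<in> subdiff (recession f) 0 \<longrightarrow> (\<forall>y. recession h y \<ge> 0)"
    using xs_in_subdiff_recession_iff by (metis surjD)
  moreover have "{y. recession h y \<le> 0} = {0} \<longrightarrow>
      {x. A x = 0} = {u. recession f u \<le> ereal (xs u)} \<and> xs \<in> qri (wclosure (conj_dom f))"
    using kernel_eq_recession_sublevel xs_in_qri_if_sublevel_trivial by blast
  moreover have "range A = UNIV \<and> {x. A x = 0} = {u. recession f u \<le> ereal (xs u)} \<longrightarrow>
      {y. recession h y \<le> 0} = {0}"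
    using sublevel_trivial_if_kernel_eq by blast
  moreover have "(\<exists>c::real. \<forall>y. ereal c \<le> h y) \<longrightarrow> (\<forall>y. recession h y \<ge> 0) \<and> xs \<in> conj_dom f"
    using bounded_below_consequences by blast
  moreover have "range A = UNIV \<longrightarrow> (INF y. h y) = - conj f xs \<and>
      ((\<exists>c::real. \<forall>y. ereal c \<le> h y) \<longleftrightarrow> xs \<in> conj_dom f)"
    using conj_xs_eq bounded_below_iff by simp
  moreover have "range A = UNIV \<longrightarrow> ((\<exists>y. h y = (INF z. h z)) \<longleftrightarrow> xs \<in> Im_subdiff f)"
    using attains_inf_iff by blast
  ultimately show ?thesis by (intro conjI) blast+
qed

end
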